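(* Let $X$ be a separable Banach space such that $X^\ast$ is non-separable, let $\mathcal{T}$ be a downwards-closed subtree of $\Omega$, and let $\varrho\in(0,1)$. Then there exist families $(x_t)_{t\in\mathcal{T}}\subseteq(1+\varrho)B_X$ and $(x_t^\ast)_{t\in\overline{\mathcal{T}}}\subseteq(1+\varrho)B_{X^\ast}$ such that $$\langle x_t^\ast,x_s\rangle=\begin{cases}1,&s\sqsubseteq' t\\0,&s\not\sqsubseteq' t\end{cases}\qquad(s\in\mathcal{T},\ t\in\overline{\mathcal{T}}),$$ and the map $t\mapsto x_t^\ast$ from $\overline{\mathcal{T}}$ (coarse wedge topology) to $(1+\varrho)B_{X^\ast}$ (weak$^\ast$ topology) is continuous.
   Context: $B_X$, $B_{X^\ast}$ are closed unit balls. $\Omega$ denotes the set of all finite (possibly empty) sequences of natural numbers, ordered by $s\sqsubseteq t$ iff $s$ is an initial segment of $t$; $\mathcal{T}\subseteq\Omega$ is downwards closed if $t\in\mathcal{T}$, $s\sqsubseteq t$ imply $s\in\mathcal{T}$. $\partial\mathcal{T}$ is the set of infinite branches (infinite maximal totally ordered subsets) of $\mathcal{T}$ and $\overline{\mathcal{T}}=\mathcal{T}\cup\partial\mathcal{T}$, ordered by $s\sqsubseteq' t$ iff ($s,t\in\Omega$, $s\sqsubseteq t$) or ($s\in\Omega$, $t\in\partial\mathcal{T}$, $s\in t$) or ($s=t\in\partial\mathcal{T}$). The coarse wedge topology on $\overline{\mathcal{T}}$ is generated by the subbase of sets $\{u\in\overline{\mathcal{T}}:t\sqsubseteq' u\}$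 and their complements, $t\in\mathcal{T}$. *)

theory Defs
  imports "HOL-Analysis.Analysis" "HOL-Library.Sublist"
begin

text \<open>Omega = nat list, ordered by prefix. A subtree is a prefix-closed set.\<close>
definition downwards_closed :: "nat list set \<Rightarrow> bool" where
  "downwards_closed T \<longleftrightarrow> (\<forall>t s. t \<in> T \<and> prefix s t \<longrightarrow> s \<in> T)"

definition is_chain_in :: "nat list set \<Rightarrow> nat list set \<Rightarrow> bool" where
  "is_chain_in T C \<longleftrightarrow> C \<subseteq> T \<and> (\<forall>s\<in>C. \<forall>t\<in>C. prefix s t \<or> prefix t s)"

definition branches :: "nat list set \<Rightarrow> nat list set set" where
  "branches T = {B. is_chain_in T B \<and> infinite B \<and>
                    (\<forall>C. is_chain_in T C \<and> B \<subseteq> C \<longrightarrow> C = B)}"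

text \<open>The completed tree: nodes are Inl t, branches are Inr b.\<close>
definition tree_closure :: "nat list set \<Rightarrow> (nat list + nat list set) set" where
  "tree_closure T = Inl ` T \<union> Inr ` branches T"

fun wedge_le :: "(nat list + nat list set) \<Rightarrow> (nat list + nat list set) \<Rightarrow> bool" where
  "wedge_le (Inl s) (Inl t) = prefix s t"
| "wedge_le (Inl s) (Inr b) = (s \<in> b)"
| "wedge_le (Inr a) (Inr b) = (a = b)"
| "wedge_le (Inr a) (Inl t) = False"

definition coarse_wedge_topology :: "nat list set \<Rightarrow> (nat list + nat list set) topology" where
  "coarse_wedge_topology T =
     subtopology
       (topology_generated_by
          ((\<lambda>t. {u \<in> tree_closure T. wedge_le (Inl t) u}) ` T \<union>
           (\<lambda>t. tree_closure T - {u \<in> tree_closure T. wedge_le (Inl t) u}) ` T))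
       (tree_closure T)"

definition weak_star_topology :: "('a::real_normed_vector \<Rightarrow>\<^sub>L real) topology" where
  "weak_star_topology =
     topology_generated_by {{f. blinfun_apply f x \<in> U} | x U. open U}"

end

theory Submission
  imports Defs
begin

text \<open>Non-separability of \<open>X\<^sup>*\<close> gives a set \<open>S\<close> of norm-one functionals in which every member is
  weak-star approximated, on any finite set, by members of \<open>S\<close> at distance almost \<open>1\<close> from any
  prescribed finite-dimensional subspace. Enumerate \<open>\<Omega>\<close> so that parents come first, and choose
  inductively \<open>g\<^sub>n \<in> S\<close> weak-star close to the functional \<open>g\<^sub>p\<close> of the parent, together with a
  biorthogonal system \<open>(z\<^sub>n, x\<^sub>n)\<close> where \<open>z\<^sub>n\<close> is \<open>\<lambda>(g\<^sub>n - g\<^sub>p)\<close> up to a tiny perturbation (finite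
  Hahn-Banach arguments make room for \<open>x\<^sub>n\<close>). Then \<open>x\<^sup>*\<^sub>t = \<Sum>\<^sub>r\<^sub>\<sqsubseteq>\<^sub>t z\<^sub>r\<close> telescopes to \<open>\<lambda> g\<^sub>t\<close> plus a small
  error, so its norm is at most \<open>1 + \<rho>\<close>, and \<open>x\<^sup>*\<^sub>t(x\<^sub>s)\<close> is \<open>1\<close> or \<open>0\<close> according as \<open>s \<sqsubseteq> t\<close>.
  Since \<open>z\<^sub>n\<close> is small on the first \<open>n\<close> points of a dense sequence, the partial sums converge
  weak-star along every branch, uniformly in the depth, which yields the branch functionals and
  the continuity for the coarse wedge topology.\<close>

section \<open>Finite-dimensional Hahn-Banach arguments\<close>

lemma extension_constant_exists:
  fixes \<phi> :: "'a::real_normed_vector \<Rightarrow> real"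
  assumes lin: "linear \<phi>" and M: "subspace M" and a: "a \<ge> 0"
    and bd: "\<And>m. m \<in> M \<Longrightarrow> \<bar>\<phi> m\<bar> \<le> a * norm m"
  shows "\<exists>c. \<forall>m\<in>M. \<forall>t. \<bar>\<phi> m + t * c\<bar> \<le> a * norm (m + t *\<^sub>R z)"
proof -
  have key: "\<phi> m - a * norm (m - z) \<le> a * norm (m' + z) - \<phi> m'" if "m \<in> M" "m' \<in> M" for m m'
  proof -
    have "\<phi> m + \<phi> m' = \<phi> (m + m')" using lin by (simp add: linear_add)
    also have "\<dots> \<le> a * norm (m + m')" using bd[of "m + m'"] that M by (auto simp: subspace_add)
    also have "\<dots> \<le> a * (norm (m - z) + norm (m' + z))"
      using norm_triangle_ineq[of "m - z" "m' + z"] a by (intro mult_left_mono) auto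
    finally show ?thesis by (simp add: algebra_simps)
  qed
  define L where "L = (\<lambda>m. \<phi> m - a * norm (m - z)) ` M"
  define c where "c = Sup L"
  have M0: "0 \<in> M" using M by (simp add: subspace_0)
  have low: "\<phi> m - a * norm (m - z) \<le> c" if "m \<in> M" for m
    unfolding c_def L_def using that key[OF _ M0]
    by (intro cSup_upper bdd_aboveI[of _ "a * norm (0 + z) - \<phi> 0"]) auto
  have up: "c \<le> a * norm (m + z) - \<phi> m" if "m \<in> M" for m
    unfolding c_def L_def using that M0 key by (intro cSup_least) auto
  have hom: "\<phi> (r *\<^sub>R m) = r * \<phi> m" for r m using lin by (simp add: linear_scale)
  have pos: "\<bar>\<phi> m + t * c\<bar> \<le> a * norm (m + t *\<^sub>R z)" if m: "m \<in> M" and t: "t > 0" for m t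
  proof -
    have mt: "(1/t) *\<^sub>R m \<in> M" "(-1/t) *\<^sub>R m \<in> M" using m M by (auto simp: subspace_scale subspace_neg)
    have "(1/t) *\<^sub>R m + z = (1/t) *\<^sub>R (m + t *\<^sub>R z)" "(-1/t) *\<^sub>R m - z = (-1/t) *\<^sub>R (m + t *\<^sub>R z)"
      using t by (simp_all add: algebra_simps)
    hence "norm ((1/t) *\<^sub>R m + z) = norm (m + t *\<^sub>R z) / t"
      "norm ((-1/t) *\<^sub>R m - z) = norm (m + t *\<^sub>R z) / t" using t by simp_all
    hence "c \<le> a * (norm (m + t *\<^sub>R z) / t) - \<phi> m / t"
      "- \<phi> m / t - a * (norm (m + t *\<^sub>R z) / t) \<le> c"
      using up[OF mt(1)] low[OF mt(2)] hom[of "1/t" m] hom[of "-1/t" m] by simp_all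
    hence "t * c \<le> a * norm (m + t *\<^sub>R z) - \<phi> m" "- \<phi> m - a * norm (m + t *\<^sub>R z) \<le> t * c"
      using t by (simp_all add: field_simps)
    thus ?thesis by linarith
  qed
  show ?thesis
  proof (intro exI ballI allI)
    fix m and t :: real assume m: "m \<in> M"
    consider "t = 0" | "t > 0" | "t < 0" by linarith
    then show "\<bar>\<phi> m + t * c\<bar> \<le> a * norm (m + t *\<^sub>R z)"
    proof cases
      case 1 thus ?thesis using bd m by simp
    next
      case 2 thus ?thesis using pos m by blast
    next
      case 3
      have "\<bar>\<phi> (-m) + (-t) * c\<bar> \<le> a * norm (-m + (-t) *\<^sub>R z)"
        using pos[of "-m" "-t"] m M 3 by (simp add: subspace_neg)
      moreover have "-m + (-t) *\<^sub>R z = - (m + t *\<^sub>R z)" by simp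
      ultimately show ?thesis using hom[of "-1" m] by (simp only: norm_minus_cancel) (simp add: abs_minus_commute)
    qed
  qed
qed

lemma extend_from_common_kernel:
  fixes z :: "'i \<Rightarrow> ('a::real_normed_vector \<Rightarrow>\<^sub>L real)" and x :: "'i \<Rightarrow> 'a"
  assumes "finite K"
    and "\<forall>i\<in>K. \<forall>j\<in>K. blinfun_apply (z i) (x j) = (if i = j then 1 else 0)"
    and "a \<ge> 0"
    and "\<forall>y. (\<forall>i\<in>K. blinfun_apply (z i) y = 0) \<longrightarrow> \<bar>blinfun_apply \<phi> y\<bar> \<le> a * norm y"
  shows "\<exists>\<Psi>. norm \<Psi> \<le> a \<and> (\<forall>y. (\<forall>i\<in>K. blinfun_apply (z i) y = 0) \<longrightarrow> blinfun_apply \<Psi> y = blinfun_apply \<phi> y)"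
  using assms
proof (induction K arbitrary: \<phi> rule: finite_induct)
  case empty
  have "norm \<phi> \<le> a" using empty.prems by (intro norm_blinfun_bound) auto
  then show ?case by auto
next
  case (insert k K)
  define E where "E = {y. \<forall>i\<in>insert k K. blinfun_apply (z i) y = 0}"
  have sub: "subspace E" unfolding E_def subspace_def
    by (auto simp: blinfun.add_right blinfun.scaleR_right)
  have lin: "linear (blinfun_apply \<phi>)" by (simp add: bounded_linear.linear blinfun.bounded_linear_right)
  obtain c where c: "\<forall>m\<in>E. \<forall>t. \<bar>blinfun_apply \<phi> m + t * c\<bar> \<le> a * norm (m + t *\<^sub>R x k)"
    using extension_constant_exists[OF lin sub insert.prems(2)] insert.prems(3) unfolding E_def by blast
  define \<phi>' where "\<phi>' = \<phi> + (c - blinfun_apply \<phi> (x k)) *\<^sub>R z k"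
  have zkxk: "blinfun_apply (z k) (x k) = 1" using insert.prems(1) by auto
  have zixk: "blinfun_apply (z i) (x k) = 0" if "i \<in> K" for i
    using insert.prems(1) that insert.hyps(2) by force
  have bd': "\<bar>blinfun_apply \<phi>' y\<bar> \<le> a * norm y" if y: "\<forall>i\<in>K. blinfun_apply (z i) y = 0" for y
  proof -
    define t where "t = blinfun_apply (z k) y"
    define m where "m = y - t *\<^sub>R x k"
    have mE: "m \<in> E" unfolding E_def m_def
      using y zkxk zixk by (auto simp: blinfun.diff_right blinfun.scaleR_right t_def)
    have "blinfun_apply \<phi>' y = blinfun_apply \<phi> m + t * c"
      unfolding \<phi>'_def m_def t_def
      by (simp add: blinfun.diff_right blinfun.scaleR_right blinfun.add_left blinfun.diff_left blinfun.scaleR_left algebra_simps)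
    moreover have "y = m + t *\<^sub>R x k" unfolding m_def by simp
    ultimately show ?thesis using c mE by metis
  qed
  obtain \<Psi> where \<Psi>: "norm \<Psi> \<le> a" "\<forall>y. (\<forall>i\<in>K. blinfun_apply (z i) y = 0) \<longrightarrow> blinfun_apply \<Psi> y = blinfun_apply \<phi>' y"
    using insert.IH[of \<phi>'] insert.prems(1,2) bd' by auto
  show ?case
  proof (intro exI conjI allI impI)
    show "norm \<Psi> \<le> a" by fact
    fix y assume H: "\<forall>i\<in>insert k K. blinfun_apply (z i) y = 0"
    hence H1: "\<forall>i\<in>K. blinfun_apply (z i) y = 0" and H2: "blinfun_apply (z k) y = 0" by auto
    have "blinfun_apply \<Psi> y = blinfun_apply \<phi>' y" using \<Psi>(2) H1 by blast
    also have "\<dots> = blinfun_apply \<phi> y" using H2 by (simp add: \<phi>'_def blinfun.add_left blinfun.scaleR_left)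
    finally show "blinfun_apply \<Psi> y = blinfun_apply \<phi> y" .
  qed
qed

lemma biorthogonal_sum_apply:
  fixes z :: "'i \<Rightarrow> ('a::real_normed_vector \<Rightarrow>\<^sub>L real)" and x :: "'i \<Rightarrow> 'a"
  assumes K: "finite K" and bio: "\<forall>i\<in>K. \<forall>j\<in>K. blinfun_apply (z i) (x j) = (if i = j then 1 else 0)"
    and j: "j \<in> K"
  shows "blinfun_apply (\<Sum>i\<in>K. c i *\<^sub>R z i) (x j) = c j"
    and "blinfun_apply (z j) (\<Sum>i\<in>K. c i *\<^sub>R x i) = c j"
proof -
  have "blinfun_apply (\<Sum>i\<in>K. c i *\<^sub>R z i) (x j) = (\<Sum>i\<in>K. if i = j then c i else 0)"
    unfolding blinfun.sum_left blinfun.scaleR_left by (rule sum.cong) (use bio j in auto)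
  thus "blinfun_apply (\<Sum>i\<in>K. c i *\<^sub>R z i) (x j) = c j" using K j by (simp add: sum.delta')
  have "blinfun_apply (z j) (\<Sum>i\<in>K. c i *\<^sub>R x i) = (\<Sum>i\<in>K. if i = j then c i else 0)"
    unfolding blinfun.sum_right blinfun.scaleR_right by (rule sum.cong) (use bio j in auto)
  thus "blinfun_apply (z j) (\<Sum>i\<in>K. c i *\<^sub>R x i) = c j" using K j by (simp add: sum.delta')
qed

lemma vanishing_on_common_kernel_imp_in_span:
  fixes z :: "'i \<Rightarrow> ('a::real_normed_vector \<Rightarrow>\<^sub>L real)" and x :: "'i \<Rightarrow> 'a"
  assumes K: "finite K" and bio: "\<forall>i\<in>K. \<forall>j\<in>K. blinfun_apply (z i) (x j) = (if i = j then 1 else 0)"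
    and van: "\<forall>y. (\<forall>i\<in>K. blinfun_apply (z i) y = 0) \<longrightarrow> blinfun_apply \<psi> y = 0"
  shows "\<psi> = (\<Sum>i\<in>K. blinfun_apply \<psi> (x i) *\<^sub>R z i)"
proof (rule blinfun_eqI)
  fix y
  define p where "p = (\<Sum>i\<in>K. blinfun_apply (z i) y *\<^sub>R x i)"
  have "\<forall>j\<in>K. blinfun_apply (z j) (y - p) = 0"
    using biorthogonal_sum_apply(2)[OF K bio] by (simp add: p_def blinfun.diff_right)
  hence "blinfun_apply \<psi> (y - p) = 0" using van by blast
  hence "blinfun_apply \<psi> y = blinfun_apply \<psi> p" by (simp add: blinfun.diff_right)
  thus "blinfun_apply \<psi> y = blinfun_apply (\<Sum>i\<in>K. blinfun_apply \<psi> (x i) *\<^sub>R z i) y"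
    by (simp add: p_def blinfun.sum_right blinfun.sum_left blinfun.scaleR_right blinfun.scaleR_left mult.commute)
qed

lemma norming_vector_in_common_kernel:
  fixes z :: "'i \<Rightarrow> ('a::real_normed_vector \<Rightarrow>\<^sub>L real)" and x :: "'i \<Rightarrow> 'a"
  assumes K: "finite K"
    and bio: "\<forall>i\<in>K. \<forall>j\<in>K. blinfun_apply (z i) (x j) = (if i = j then 1 else 0)"
    and b: "b \<ge> 0"
    and far: "\<forall>w\<in>span (z ` K). b < norm (\<phi> - w)"
  shows "\<exists>y. (\<forall>i\<in>K. blinfun_apply (z i) y = 0) \<and> norm y \<le> 1 \<and> b \<le> blinfun_apply \<phi> y"
proof (rule ccontr)
  assume "\<not> ?thesis"
  hence small: "blinfun_apply \<phi> y < b" if "\<forall>i\<in>K. blinfun_apply (z i) y = 0" "norm y \<le> 1" for y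
    using that by (meson not_le)
  have bd: "\<bar>blinfun_apply \<phi> y\<bar> \<le> b * norm y" if y: "\<forall>i\<in>K. blinfun_apply (z i) y = 0" for y
  proof (cases "y = 0")
    case False
    define u where "u = (1 / norm y) *\<^sub>R y"
    have "norm u \<le> 1" "norm (-u) \<le> 1" using False by (simp_all add: u_def)
    moreover have "\<forall>i\<in>K. blinfun_apply (z i) u = 0" "\<forall>i\<in>K. blinfun_apply (z i) (-u) = 0"
      using y by (auto simp: u_def blinfun.scaleR_right blinfun.minus_right)
    ultimately have "blinfun_apply \<phi> u < b" "blinfun_apply \<phi> (-u) < b" using small by blast+
    hence "\<bar>blinfun_apply \<phi> u\<bar> < b" by (simp add: blinfun.minus_right)
    moreover have "blinfun_apply \<phi> u = blinfun_apply \<phi> y / norm y"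
      by (simp add: u_def blinfun.scaleR_right)
    ultimately show ?thesis using False by (simp add: field_simps)
  qed simp
  obtain \<Psi> where \<Psi>: "norm \<Psi> \<le> b"
    "\<forall>y. (\<forall>i\<in>K. blinfun_apply (z i) y = 0) \<longrightarrow> blinfun_apply \<Psi> y = blinfun_apply \<phi> y"
    using extend_from_common_kernel[OF K bio b] bd by blast
  define w where "w = (\<Sum>i\<in>K. blinfun_apply (\<phi> - \<Psi>) (x i) *\<^sub>R z i)"
  have "\<phi> - \<Psi> = w"
    unfolding w_def using \<Psi>(2)
    by (intro vanishing_on_common_kernel_imp_in_span[OF K bio]) (simp add: blinfun.diff_left)
  hence "\<Psi> = \<phi> - w" by (simp add: algebra_simps)
  moreover have "w \<in> span (z ` K)" unfolding w_def by (intro span_sum span_scale span_base) auto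
  ultimately show False using far \<Psi>(1) by fastforce
qed

lemma biorthogonal_correction:
  fixes Zf :: "nat \<Rightarrow> ('a::real_normed_vector \<Rightarrow>\<^sub>L real)" and Xf :: "nat \<Rightarrow> 'a"
  assumes bio: "\<forall>i<n. \<forall>j<n. blinfun_apply (Zf i) (Xf j) = (if i = j then 1 else 0)"
    and small: "\<forall>k<n. \<bar>blinfun_apply \<phi> (Xf k)\<bar> \<le> c"
  defines "d \<equiv> - (\<Sum>k<n. blinfun_apply \<phi> (Xf k) *\<^sub>R Zf k)"
  shows "d \<in> span (Zf ` {..<n})"
    and "\<forall>j<n. blinfun_apply (\<phi> + d) (Xf j) = 0"
    and "norm d \<le> c * (\<Sum>k<n. norm (Zf k))"
proof -
  show "d \<in> span (Zf ` {..<n})" unfolding d_def by (intro span_neg span_sum span_scale span_base) auto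
  have bio': "\<forall>i\<in>{..<n}. \<forall>j\<in>{..<n}. blinfun_apply (Zf i) (Xf j) = (if i = j then 1 else 0)"
    using bio by simp
  show "\<forall>j<n. blinfun_apply (\<phi> + d) (Xf j) = 0"
  proof (intro allI impI)
    fix j assume "j < n"
    thus "blinfun_apply (\<phi> + d) (Xf j) = 0"
      using biorthogonal_sum_apply(1)[OF finite_lessThan bio', of j "\<lambda>k. blinfun_apply \<phi> (Xf k)"]
      by (simp add: d_def blinfun.add_left blinfun.minus_left blinfun.diff_left)
  qed
  have "norm d \<le> (\<Sum>k<n. norm (blinfun_apply \<phi> (Xf k) *\<^sub>R Zf k))"
    unfolding d_def norm_minus_cancel by (rule norm_sum)
  also have "\<dots> \<le> (\<Sum>k<n. c * norm (Zf k))"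
    using small by (intro sum_mono) (simp add: mult_right_mono)
  finally show "norm d \<le> c * (\<Sum>k<n. norm (Zf k))" by (simp add: sum_distrib_left)
qed

lemma small_parameter_exists:
  fixes l A R \<eta> c :: real
  assumes "l > 0" "A \<ge> 0" "R \<ge> 0" "\<eta> > 0" "c > 0"
  shows "\<exists>\<tau>>0. l * \<tau> * A \<le> \<eta> \<and> l * \<tau> + l * \<tau> * A * R \<le> c"
proof (intro exI conjI)
  define \<tau> where "\<tau> = min \<eta> c / (l * (1 + A) * (1 + R))"
  show "\<tau> > 0" using assms by (simp add: \<tau>_def)
  have "l * \<tau> * (1 + A) * (1 + R) = min \<eta> c" using assms by (simp add: \<tau>_def)
  moreover have "l * \<tau> * A \<le> l * \<tau> * (1 + A) * (1 + R)"
    "l * \<tau> + l * \<tau> * A * R \<le> l * \<tau> * (1 + A) * (1 + R)"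
    using assms \<open>\<tau> > 0\<close> by (simp_all add: algebra_simps)
  ultimately show "l * \<tau> * A \<le> \<eta>" "l * \<tau> + l * \<tau> * A * R \<le> c" by linarith+
qed

section \<open>Consequences of non-separability of the dual\<close>

lemma span_rational_approx:
  fixes C :: "'b::real_normed_vector set"
  assumes "y \<in> span C" "e > 0"
  shows "\<exists>F q. finite F \<and> F \<subseteq> C \<and> q \<in> F \<rightarrow>\<^sub>E \<rat> \<and> norm (y - (\<Sum>v\<in>F. q v *\<^sub>R v)) < e"
proof -
  obtain F u where F: "finite F" "F \<subseteq> C" "y = (\<Sum>v\<in>F. u v *\<^sub>R v)"
    using assms(1) unfolding span_explicit by blast
  define \<epsilon> where "\<epsilon> = (\<lambda>v::'b. e / ((card F + 1) * (norm v + 1)))"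
  have \<epsilon>pos: "\<epsilon> v > 0" for v using assms(2) unfolding \<epsilon>_def by (intro divide_pos_pos mult_pos_pos) (auto intro: add_pos_nonneg simp: add_nonneg_pos)
  have "\<forall>v::'b. \<exists>r. r \<in> \<rat> \<and> u v < r \<and> r < u v + \<epsilon> v"
  proof
    fix v show "\<exists>r. r \<in> \<rat> \<and> u v < r \<and> r < u v + \<epsilon> v"
      using Rats_dense_in_real[of "u v" "u v + \<epsilon> v"] \<epsilon>pos[of v] by auto
  qed
  then obtain r where r': "\<forall>v. r v \<in> \<rat> \<and> u v < r v \<and> r v < u v + \<epsilon> v" by (rule choice[THEN exE]) 
  hence r: "\<And>v. r v \<in> \<rat>" "\<And>v. u v < r v \<and> r v < u v + \<epsilon> v" by auto
  define q where "q = restrict r F"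
  have q: "q \<in> F \<rightarrow>\<^sub>E \<rat>" using r(1) by (simp add: q_def)
  have "y - (\<Sum>v\<in>F. q v *\<^sub>R v) = (\<Sum>v\<in>F. (u v - r v) *\<^sub>R v)"
    by (simp add: F(3) q_def sum_subtractf scaleR_diff_left)
  hence "norm (y - (\<Sum>v\<in>F. q v *\<^sub>R v)) \<le> (\<Sum>v\<in>F. norm ((u v - r v) *\<^sub>R v))"
    by (metis norm_sum)
  also have "\<dots> = (\<Sum>v\<in>F. \<bar>u v - r v\<bar> * norm v)" by simp
  also have "\<dots> \<le> (\<Sum>v\<in>F. e / (card F + 1))"
  proof (rule sum_mono)
    fix v
    have "\<bar>u v - r v\<bar> \<le> \<epsilon> v" using r(2)[of v] by simp
    hence "\<bar>u v - r v\<bar> * norm v \<le> \<epsilon> v * (norm v + 1)"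
      by (intro mult_mono) auto
    also have "\<dots> = e / (card F + 1)"
    proof -
      have p1: "norm v + 1 \<noteq> 0" by (metis add_nonneg_pos norm_ge_zero zero_less_one less_irrefl)
      have "\<epsilon> v = e / (card F + 1) / (norm v + 1)" by (simp add: \<epsilon>_def divide_divide_eq_left)
      thus ?thesis using p1 by simp
    qed
    finally show "\<bar>u v - r v\<bar> * norm v \<le> e / (card F + 1)" .
  qed
  also have "\<dots> = card F * e / (card F + 1)" by simp
  also have "\<dots> < e" using assms(2) by (simp add: field_simps)
  finally show ?thesis using F q by blast
qed

lemma separable_if_closure_span_countable:
  fixes C :: "'b::real_normed_vector set"
  assumes C: "countable C" and dense: "closure (span C) = UNIV"
  shows "separable_space (euclidean :: 'b topology)"
proof -
  define P :: "('b set \<times> ('b \<Rightarrow> real)) set" where "P = (SIGMA F:{F. finite F \<and> F \<subseteq> C}. F \<rightarrow>\<^sub>E \<rat>)"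
  define D where "D = (\<lambda>(F,q). \<Sum>v\<in>F. q v *\<^sub>R v) ` P"
  have "countable (F \<rightarrow>\<^sub>E (\<rat> :: real set))" if "finite F" for F :: "'b set"
    using that by (intro countable_PiE) (auto intro: countable_rat)
  hence "countable P" unfolding P_def
    by (intro countable_SIGMA countable_Collect_finite_subset[OF C]) simp
  hence D: "countable D" unfolding D_def by (rule countable_image)
  have "y \<in> closure D" if y: "y \<in> span C" for y
    unfolding closure_approachable
  proof (intro allI impI)
    fix e :: real assume "e > 0"
    from span_rational_approx[OF y this] obtain F q where
      Fq: "finite F" "F \<subseteq> C" "q \<in> F \<rightarrow>\<^sub>E \<rat>" "norm (y - (\<Sum>v\<in>F. q v *\<^sub>R v)) < e"
      by blast
    have "(F, q) \<in> P" using Fq(1-3) unfolding P_def by blast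
    hence "(\<lambda>(F, q). \<Sum>v\<in>F. q v *\<^sub>R v) (F, q) \<in> D" unfolding D_def by (rule imageI)
    moreover have "dist ((\<lambda>(F, q). \<Sum>v\<in>F. q v *\<^sub>R v) (F, q)) y < e" using Fq(4) by (simp add: dist_norm norm_minus_commute)
    ultimately show "\<exists>d\<in>D. dist d y < e" by blast
  qed
  hence "closure (span C) \<subseteq> closure D" by (intro closure_minimal) auto
  hence "closure D = UNIV" using dense by blast
  thus ?thesis using D unfolding separable_space_def by (intro exI[of _ D]) simp
qed

lemma closure_span_if_unit_vectors_close:
  fixes C :: "'b::real_normed_vector set"
  assumes \<theta>: "0 < \<theta>" "\<theta> < 1"
    and close: "\<And>g. norm g = 1 \<Longrightarrow> \<exists>w\<in>span C. norm (g - w) < \<theta>"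
  shows "closure (span C) = UNIV"
proof -
  have "\<exists>w\<in>span C. norm (g - w) < e" if e: "e > 0" for g e
  proof (rule ccontr)
    assume "\<not> ?thesis"
    hence ge: "\<forall>w\<in>span C. e \<le> norm (g - w)" by (meson not_le)
    define N where "N = (\<lambda>w. norm (g - w)) ` span C"
    have Nne: "N \<noteq> {}" using span_zero[of C] by (auto simp: N_def)
    have Nbdd: "bdd_below N" by (rule bdd_belowI[of _ 0]) (auto simp: N_def)
    define a where "a = Inf N"
    have ae: "e \<le> a" unfolding a_def using Nne ge by (intro cInf_greatest) (auto simp: N_def)
    have alow: "a \<le> norm (g - w)" if "w \<in> span C" for w
      unfolding a_def using Nbdd that by (intro cInf_lower) (auto simp: N_def)
    have "a < a / \<theta>" using ae e \<theta> by (simp add: field_simps)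
    then obtain w0 where w0: "w0 \<in> span C" "norm (g - w0) < a / \<theta>"
      using cInf_less_iff[OF Nne Nbdd] unfolding a_def[symmetric] by (auto simp: N_def)
    define h where "h = norm (g - w0)"
    have h: "h > 0" using alow[OF w0(1)] ae e unfolding h_def by linarith
    obtain w1 where w1: "w1 \<in> span C" "norm ((1 / h) *\<^sub>R (g - w0) - w1) < \<theta>"
      using close[of "(1 / h) *\<^sub>R (g - w0)"] h by (auto simp: h_def)
    have "g - (w0 + h *\<^sub>R w1) = h *\<^sub>R ((1 / h) *\<^sub>R (g - w0) - w1)"
      using h by (simp add: algebra_simps)
    hence "norm (g - (w0 + h *\<^sub>R w1)) < h * \<theta>" using w1(2) h by simp
    also have "\<dots> < a" using w0(2) \<theta> by (simp add: h_def field_simps)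
    moreover have "w0 + h *\<^sub>R w1 \<in> span C" using w0(1) w1(1) by (simp add: span_add span_scale)
    ultimately show False using alow by fastforce
  qed
  hence "g \<in> closure (span C)" for g
    unfolding closure_approachable by (metis dist_norm norm_minus_commute)
  thus ?thesis by blast
qed

lemma nonseparable_far_unit_vector:
  fixes C :: "'b::real_normed_vector set"
  assumes "\<not> separable_space (euclidean :: 'b topology)"
    and "0 < \<delta>" "\<delta> < 1" and "countable C"
  shows "\<exists>g. norm g = 1 \<and> (\<forall>w\<in>span C. 1 - \<delta> \<le> norm (g - w))"
proof (rule ccontr)
  assume "\<not> ?thesis"
  hence "\<And>g. norm g = 1 \<Longrightarrow> \<exists>w\<in>span C. norm (g - w) < 1 - \<delta>" by (meson not_le)
  hence "closure (span C) = UNIV" using assms(2,3) by (intro closure_span_if_unit_vectors_close[of "1 - \<delta>"]) auto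
  thus False using separable_if_closure_span_countable assms(1,4) by blast
qed

lemma blinfun_apply_diff_le: "\<bar>blinfun_apply \<phi> y - blinfun_apply \<phi> d\<bar> \<le> norm \<phi> * norm (y - d)"
  by (metis blinfun.diff_right norm_blinfun real_norm_def)

lemma apply_diff_le_at_nearby:
  assumes "norm \<phi> \<le> B" "norm \<psi> \<le> B"
  shows "\<bar>blinfun_apply \<phi> y - blinfun_apply \<psi> y\<bar> \<le> \<bar>blinfun_apply \<phi> d - blinfun_apply \<psi> d\<bar> + 2 * B * norm (y - d)"
proof -
  have a: "\<bar>blinfun_apply \<phi> y - blinfun_apply \<phi> d\<bar> \<le> B * norm (y - d)"
    using blinfun_apply_diff_le[of \<phi> y d] assms(1) by (meson mult_right_mono norm_ge_zero order_trans)
  have b: "\<bar>blinfun_apply \<psi> y - blinfun_apply \<psi> d\<bar> \<le> B * norm (y - d)"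
    using blinfun_apply_diff_le[of \<psi> y d] assms(2) by (meson mult_right_mono norm_ge_zero order_trans)
  show ?thesis using a b unfolding abs_le_iff by linarith
qed

lemma rat_approx_real: "e > 0 \<Longrightarrow> \<exists>r::rat. \<bar>(x::real) - of_rat r\<bar> < e"
proof -
  assume e: "e > 0"
  obtain r where "r \<in> \<rat>" "x < r" "r < x + e" using Rats_dense_in_real[of x "x + e"] e by auto
  then obtain r' where "r = of_rat r'" by (auto elim: Rats_cases)
  with \<open>x < r\<close> \<open>r < x + e\<close> show ?thesis by (intro exI[of _ r']) auto
qed

text \<open>Countably many weak-star open sets; on the unit ball they form a neighbourhood base of the
  weak-star topology when \<open>dseq\<close> is dense.\<close>
definition weak_star_box :: "(nat \<Rightarrow> 'a::real_normed_vector) \<Rightarrow> nat \<times> rat list \<Rightarrow> ('a \<Rightarrow>\<^sub>L real) set" where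
  "weak_star_box dseq j = {g. \<forall>i<fst j. \<bar>blinfun_apply g (dseq i) - of_rat (snd j ! i)\<bar> < 1 / Suc (fst j)}"

lemma weak_star_box_nbhd:
  fixes dseq :: "nat \<Rightarrow> 'a::real_normed_vector" and f :: "'a \<Rightarrow>\<^sub>L real"
  assumes dense: "\<forall>y e. e > 0 \<longrightarrow> (\<exists>i. norm (y - dseq i) < e)"
    and f: "norm f \<le> 1" and Z: "finite Z" and \<tau>: "\<tau> > 0"
  shows "\<exists>j. f \<in> weak_star_box dseq j \<and> (\<forall>g. norm g \<le> 1 \<longrightarrow> g \<in> weak_star_box dseq j \<longrightarrow>
           (\<forall>y\<in>Z. \<bar>blinfun_apply g y - blinfun_apply f y\<bar> < \<tau>))"
proof -
  have "\<forall>y. \<exists>i. norm (y - dseq i) < \<tau>/4" using dense[rule_format, of "\<tau>/4"] \<tau> by simp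
  then obtain ix where ix: "\<And>y. norm (y - dseq (ix y)) < \<tau>/4" by metis
  obtain n :: nat where n: "4 / \<tau> < n" using reals_Archimedean2 by blast
  define k where "k = max (Suc (Max (ix ` Z))) n"
  have ixk: "ix y < k" if "y \<in> Z" for y
  proof -
    have "ix y \<le> Max (ix ` Z)" using Z that by auto
    thus ?thesis unfolding k_def by linarith
  qed
  have "4 / \<tau> < Suc k" using n unfolding k_def by linarith
  hence kt: "2 / Suc k < \<tau> / 2" using \<tau> by (simp add: field_simps)
  have "\<forall>i. \<exists>r. \<bar>blinfun_apply f (dseq i) - of_rat r\<bar> < 1 / Suc k"
    using rat_approx_real by simp
  then obtain rr where rr: "\<And>i. \<bar>blinfun_apply f (dseq i) - of_rat (rr i)\<bar> < 1 / Suc k" by metis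
  define j where "j = (k, map rr [0..<k])"
  have "f \<in> weak_star_box dseq j" using rr by (simp add: weak_star_box_def j_def)
  moreover have "\<bar>blinfun_apply g y - blinfun_apply f y\<bar> < \<tau>"
    if g: "norm g \<le> 1" "g \<in> weak_star_box dseq j" and y: "y \<in> Z" for g y
  proof -
    define i where "i = ix y"
    have "\<bar>blinfun_apply g (dseq i) - of_rat (rr i)\<bar> < 1 / Suc k"
      using g(2) ixk[OF y] by (simp add: weak_star_box_def j_def i_def)
    hence "\<bar>blinfun_apply g (dseq i) - blinfun_apply f (dseq i)\<bar> < 2 / Suc k"
      using rr[of i] by (simp add: abs_less_iff)
    moreover have "\<bar>blinfun_apply g y - blinfun_apply f y\<bar>
        \<le> \<bar>blinfun_apply g (dseq i) - blinfun_apply f (dseq i)\<bar> + 2 * 1 * norm (y - dseq i)"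
      by (rule apply_diff_le_at_nearby[OF g(1) f])
    ultimately show ?thesis using ix[of y] kt by (simp add: i_def)
  qed
  ultimately show ?thesis by blast
qed

definition far_unit_functionals :: "real \<Rightarrow> ('a::real_normed_vector \<Rightarrow>\<^sub>L real) set \<Rightarrow> ('a \<Rightarrow>\<^sub>L real) set" where
  "far_unit_functionals \<delta> C = {g. norm g = 1 \<and> (\<forall>w\<in>span C. 1 - \<delta> \<le> norm (g - w))}"

lemma far_unit_functionals_antimono: "C \<subseteq> C' \<Longrightarrow> far_unit_functionals \<delta> C' \<subseteq> far_unit_functionals \<delta> C"
  using span_mono unfolding far_unit_functionals_def by blast

text \<open>Remove every box that some countable set keeps away from the far functionals; countably many
  countable sets do this, and their union still leaves far functionals in every remaining box.\<close>
lemma far_approximating_set_exists: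
  fixes dseq :: "nat \<Rightarrow> 'a::real_normed_vector"
  assumes nsep: "\<not> separable_space (euclidean :: ('a \<Rightarrow>\<^sub>L real) topology)"
    and d: "0 < \<delta>" "\<delta> < 1"
    and dense: "\<forall>y e. e > 0 \<longrightarrow> (\<exists>i. norm (y - dseq i) < e)"
  shows "\<exists>S::('a \<Rightarrow>\<^sub>L real) set. S \<noteq> {} \<and> (\<forall>f\<in>S. norm f = 1) \<and>
    (\<forall>f\<in>S. \<forall>Z \<tau> U. finite Z \<longrightarrow> \<tau> > 0 \<longrightarrow> finite U \<longrightarrow>
       (\<exists>g\<in>S. (\<forall>y\<in>Z. \<bar>blinfun_apply g y - blinfun_apply f y\<bar> < \<tau>) \<and> (\<forall>w\<in>span U. 1 - \<delta> \<le> norm (g - w))))"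
proof -
  let ?far = "far_unit_functionals \<delta> :: ('a \<Rightarrow>\<^sub>L real) set \<Rightarrow> _"
  have far_ne: "?far C \<noteq> {}" if "countable C" for C
    using nonseparable_far_unit_vector[OF nsep d that] unfolding far_unit_functionals_def by blast
  define avoidable where "avoidable = (\<lambda>j. \<exists>C. countable C \<and> ?far C \<inter> weak_star_box dseq j = {})"
  define Cb where "Cb = (\<lambda>j. SOME C. countable C \<and> ?far C \<inter> weak_star_box dseq j = {})"
  have Cb: "countable (Cb j) \<and> ?far (Cb j) \<inter> weak_star_box dseq j = {}" if "avoidable j" for j
    using someI_ex[OF that[unfolded avoidable_def]] unfolding Cb_def .
  define Cs where "Cs = (\<Union>j\<in>{j. avoidable j}. Cb j)"
  have Cs: "countable Cs" unfolding Cs_def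
    by (rule countable_UN[OF countableI_type]) (use Cb in blast)
  define S where "S = {f. norm f = 1 \<and> (\<forall>j. f \<in> weak_star_box dseq j \<longrightarrow> \<not> avoidable j)}"
  have farS: "?far (Cs \<union> U) \<subseteq> S" for U
  proof
    fix g assume g: "g \<in> ?far (Cs \<union> U)"
    have "\<not> avoidable j" if "g \<in> weak_star_box dseq j" for j
    proof
      assume j: "avoidable j"
      hence "Cb j \<subseteq> Cs \<union> U" unfolding Cs_def by blast
      hence "g \<in> ?far (Cb j)" using far_unit_functionals_antimono g by blast
      with Cb[OF j] that show False by blast
    qed
    thus "g \<in> S" using g unfolding S_def far_unit_functionals_def by blast
  qed
  have "S \<noteq> {}" using farS[of "{}"] far_ne[of Cs] Cs by auto
  moreover have "\<exists>g\<in>S. (\<forall>y\<in>Z. \<bar>blinfun_apply g y - blinfun_apply f y\<bar> < \<tau>) \<and> (\<forall>w\<in>span U. 1 - \<delta> \<le> norm (g - w))"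
    if f: "f \<in> S" and Z: "finite Z" and \<tau>: "\<tau> > 0" and U: "finite U" for f Z \<tau> U
  proof -
    obtain j where j: "f \<in> weak_star_box dseq j"
      "\<forall>g. norm g \<le> 1 \<longrightarrow> g \<in> weak_star_box dseq j \<longrightarrow> (\<forall>y\<in>Z. \<bar>blinfun_apply g y - blinfun_apply f y\<bar> < \<tau>)"
      using weak_star_box_nbhd[OF dense _ Z \<tau>, of f] f by (auto simp: S_def)
    have "\<not> avoidable j" using f j(1) unfolding S_def by blast
    moreover have "countable (Cs \<union> U)" using Cs U by (simp add: countable_finite)
    ultimately obtain g where g: "g \<in> ?far (Cs \<union> U)" "g \<in> weak_star_box dseq j"
      unfolding avoidable_def by blast
    hence "norm g = 1" "\<forall>w\<in>span U. 1 - \<delta> \<le> norm (g - w)"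
      using far_unit_functionals_antimono[of U "Cs \<union> U" \<delta>] unfolding far_unit_functionals_def by blast+
    moreover have "g \<in> S" using farS g(1) by blast
    ultimately show ?thesis using g(2) j(2) by (intro bexI[of _ g]) auto
  qed
  ultimately show ?thesis by (intro exI[of _ S] conjI ballI allI impI) (auto simp: S_def)
qed

section \<open>Pointwise limits and weak-star continuity\<close>

definition blinfun_lim :: "(nat \<Rightarrow> 'a::real_normed_vector \<Rightarrow>\<^sub>L 'b::real_normed_vector) \<Rightarrow> 'a \<Rightarrow>\<^sub>L 'b" where
  "blinfun_lim f = Blinfun (\<lambda>y. lim (\<lambda>k. blinfun_apply (f k) y))"

lemma
  fixes f :: "nat \<Rightarrow> 'a::real_normed_vector \<Rightarrow>\<^sub>L 'b::real_normed_vector"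
  assumes bd: "\<And>k. norm (f k) \<le> B" and conv: "\<And>y. convergent (\<lambda>k. blinfun_apply (f k) y)"
  shows blinfun_lim_tendsto: "(\<lambda>k. blinfun_apply (f k) y) \<longlonglongrightarrow> blinfun_apply (blinfun_lim f) y"
    and norm_blinfun_lim_le: "norm (blinfun_lim f) \<le> B"
proof -
  define L where "L = (\<lambda>y. lim (\<lambda>k. blinfun_apply (f k) y))"
  have L: "(\<lambda>k. blinfun_apply (f k) y) \<longlonglongrightarrow> L y" for y
    using conv by (simp add: L_def convergent_LIMSEQ_iff)
  have fk: "norm (blinfun_apply (f k) y) \<le> norm y * B" for k y
  proof -
    have "norm (blinfun_apply (f k) y) \<le> norm (f k) * norm y" by (rule norm_blinfun)
    also have "\<dots> \<le> B * norm y" by (rule mult_right_mono[OF bd norm_ge_zero])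
    finally show ?thesis by (simp add: mult.commute)
  qed
  have bound: "norm (L y) \<le> norm y * B" for y
    using LIMSEQ_le_const2[OF tendsto_norm[OF L]] fk by blast
  have "bounded_linear L"
  proof (rule bounded_linear_intro[OF _ _ bound])
    fix x y
    have "(\<lambda>k. blinfun_apply (f k) (x + y)) \<longlonglongrightarrow> L x + L y"
      using tendsto_add[OF L[of x] L[of y]] by (simp add: blinfun.add_right)
    thus "L (x + y) = L x + L y" using L[of "x + y"] LIMSEQ_unique by blast
  next
    fix r x
    have "(\<lambda>k. blinfun_apply (f k) (r *\<^sub>R x)) \<longlonglongrightarrow> r *\<^sub>R L x"
      using tendsto_scaleR[OF tendsto_const L[of x]] by (simp add: blinfun.scaleR_right)
    thus "L (r *\<^sub>R x) = r *\<^sub>R L x" using L[of "r *\<^sub>R x"] LIMSEQ_unique by blast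
  qed
  hence app: "blinfun_apply (blinfun_lim f) = L"
    unfolding blinfun_lim_def L_def[symmetric] by (rule bounded_linear_Blinfun_apply)
  show "(\<lambda>k. blinfun_apply (f k) y) \<longlonglongrightarrow> blinfun_apply (blinfun_lim f) y" using L by (simp add: app)
  have "0 \<le> B" using order_trans[OF norm_ge_zero bd] .
  thus "norm (blinfun_lim f) \<le> B" using bound by (intro norm_blinfun_bound) (simp_all add: app mult.commute)
qed

lemma continuous_map_real_by_nbhds:
  fixes g :: "'x \<Rightarrow> real"
  assumes nb: "\<And>u e. u \<in> topspace X \<Longrightarrow> e > 0 \<Longrightarrow> \<exists>N. openin X N \<and> u \<in> N \<and> (\<forall>w\<in>N. \<bar>g w - g u\<bar> < e)"
  shows "continuous_map X euclideanreal g"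
proof -
  have "openin X {x \<in> topspace X. g x \<in> V}" if V: "open V" for V
  proof (subst openin_subopen, intro ballI)
    fix u assume "u \<in> {x \<in> topspace X. g x \<in> V}"
    hence u: "u \<in> topspace X" "g u \<in> V" by simp_all
    obtain e where e: "e > 0" "ball (g u) e \<subseteq> V" using openE[OF V u(2)] .
    obtain N where N: "openin X N" "u \<in> N" "\<forall>w\<in>N. \<bar>g w - g u\<bar> < e" using nb[OF u(1) e(1)] by blast
    have "g w \<in> ball (g u) e" if "w \<in> N" for w
      using N(3) that unfolding mem_ball dist_real_def by (metis abs_minus_commute)
    hence "N \<subseteq> {x \<in> topspace X. g x \<in> V}" using e(2) openin_subset[OF N(1)] by blast
    thus "\<exists>N. openin X N \<and> u \<in> N \<and> N \<subseteq> {x \<in> topspace X. g x \<in> V}" using N(1,2) by blast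
  qed
  thus ?thesis unfolding continuous_map_def by simp
qed

lemma continuous_map_weak_star:
  fixes f :: "'x \<Rightarrow> ('a::real_normed_vector \<Rightarrow>\<^sub>L real)"
  assumes cont: "\<And>x. continuous_map X euclideanreal (\<lambda>u. blinfun_apply (f u) x)"
  shows "continuous_map X weak_star_topology f"
  unfolding weak_star_topology_def
proof (rule continuous_on_generated_topo)
  fix U assume "U \<in> {{f. blinfun_apply f x \<in> V} | (x :: 'a) (V :: real set). open V}"
  then obtain x V where U: "U = {f. blinfun_apply f x \<in> V}" and V: "open V" by blast
  have "openin X {u \<in> topspace X. blinfun_apply (f u) x \<in> V}"
    using cont[of x] V unfolding continuous_map_def by simp
  moreover have "f -` U \<inter> topspace X = {u \<in> topspace X. blinfun_apply (f u) x \<in> V}"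
    unfolding U by blast
  ultimately show "openin X (f -` U \<inter> topspace X)" by simp
next
  have "UNIV \<in> {{f. blinfun_apply f x \<in> V} | (x :: 'a) (V :: real set). open V}"
    by (rule CollectI, rule exI[of _ 0], rule exI[of _ UNIV]) simp
  thus "f ` topspace X \<subseteq> \<Union> {{f. blinfun_apply f x \<in> V} | (x :: 'a) (V :: real set). open V}" by blast
qed

section \<open>Trees, branches and the coarse wedge topology\<close>

text \<open>An enumeration of \<open>\<Omega>\<close> in which every node comes after its parent and \<open>t @ [m]\<close> after \<open>m\<close>.\<close>
definition code :: "nat list \<Rightarrow> nat" where "code t = list_encode (rev t)"

definition parent_code :: "nat \<Rightarrow> nat" where "parent_code k = code (butlast (rev (list_decode k)))"

lemma code_Nil [simp]: "code [] = 0"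
  by (simp add: code_def)

lemma code_snoc: "code (t @ [m]) = Suc (prod_encode (m, code t))"
  by (simp add: code_def)

lemma code_eq_iff: "code s = code t \<longleftrightarrow> s = t"
  unfolding code_def by (metis list_encode_inverse rev_rev_ident)

lemma inj_on_code: "inj_on code A"
  by (meson code_eq_iff inj_onI)

lemma code_less_code_snoc: "code t < code (t @ [m])"
  using le_prod_encode_2[of "code t" m] by (simp add: code_snoc)

lemma less_code_snoc: "m < code (t @ [m])"
  using le_prod_encode_1[of m "code t"] by (simp add: code_snoc)

lemma code_prefix_le: "prefix s t \<Longrightarrow> code s \<le> code t"
proof (induction t rule: rev_induct)
  case (snoc m t)
  thus ?case using code_less_code_snoc[of t m] by (auto simp del: prefix_snoc simp: prefix_snoc)
qed simp

lemma code_strict_prefix_less: "prefix s t \<Longrightarrow> s \<noteq> t \<Longrightarrow> code s < code t"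
proof (cases t rule: rev_cases)
  case (snoc t' m)
  assume "prefix s t" "s \<noteq> t"
  hence "code s \<le> code t'" using snoc by (intro code_prefix_le) simp
  thus ?thesis using code_less_code_snoc[of t' m] snoc by simp
qed simp

lemma length_le_code: "length t \<le> code t"
proof (induction t rule: rev_induct)
  case (snoc m t) thus ?case using code_less_code_snoc[of t m] by simp
qed simp

lemma parent_code_snoc [simp]: "parent_code (code (t @ [m])) = code t"
  by (simp add: parent_code_def code_def)

lemma parent_code_less: "n \<noteq> 0 \<Longrightarrow> parent_code n < n"
proof -
  assume n: "n \<noteq> 0"
  define t where "t = rev (list_decode n)"
  have t: "code t = n" by (simp add: t_def code_def)
  with n obtain t' m where "t = t' @ [m]" by (metis code_Nil rev_exhaust)
  thus ?thesis using t code_less_code_snoc[of t' m] by auto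
qed

lemma sum_half_powers_le:
  fixes A :: "nat set"
  assumes "finite A" "\<forall>k\<in>A. m \<le> k"
  shows "(\<Sum>k\<in>A. (1/2::real)^k) \<le> 2 * (1/2)^m"
proof -
  define N where "N = Suc (Max (insert 0 A))"
  have "x \<in> {m..<m+N}" if "x \<in> A" for x
  proof -
    have "x \<le> Max (insert 0 A)" using assms(1) that by (intro Max_ge) auto
    thus ?thesis using assms(2) that by (auto simp: N_def)
  qed
  hence "A \<subseteq> {m..<m+N}" by blast
  hence "(\<Sum>k\<in>A. (1/2::real)^k) \<le> (\<Sum>k\<in>{m..<m+N}. (1/2::real)^k)"
    by (intro sum_mono2) auto
  also have "\<dots> = 2 * (1/2)^m - 2 * (1/2)^(m+N)"
    by (induction N) simp_all
  finally show ?thesis by (smt (verit) zero_le_power zero_le_divide_1_iff)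
qed

lemma finite_prefixes_set: "finite {r. prefix r t}"
  by (simp flip: set_prefixes_eq)

lemma prefixes_set_snoc: "{r. prefix r (t @ [m])} = insert (t @ [m]) {r. prefix r t}"
  by auto

lemma snoc_not_in_prefixes_set: "t @ [m] \<notin> {r. prefix r t}"
  using prefix_length_le[of "t @ [m]" t] by auto

lemma prefix_same_length_eq: "prefix s u \<Longrightarrow> length s = length u \<Longrightarrow> s = u"
  by (auto simp: prefix_def)

lemma tree_closure_cases:
  assumes "u \<in> tree_closure T"
  obtains t where "u = Inl t" "t \<in> T" | b where "u = Inr b" "b \<in> branches T"
  using assms unfolding tree_closure_def by blast

lemma branchesD:
  assumes "b \<in> branches T"
  shows "b \<subseteq> T" and "infinite b" and "s \<in> b \<Longrightarrow> t \<in> b \<Longrightarrow> prefix s t \<or> prefix t s"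
  using assms by (simp_all add: branches_def is_chain_in_def)

lemma branch_prefix_closed:
  assumes dc: "downwards_closed T" and b: "b \<in> branches T" and t: "t \<in> b" and rt: "prefix r t"
  shows "r \<in> b"
proof -
  have ch: "is_chain_in T b" and mx: "\<And>C. is_chain_in T C \<Longrightarrow> b \<subseteq> C \<Longrightarrow> C = b"
    using b unfolding branches_def by blast+
  have cmp: "prefix r v \<or> prefix v r" if v: "v \<in> b" for v
  proof -
    have "prefix v t \<or> prefix t v" using ch v t unfolding is_chain_in_def by blast
    thus ?thesis
    proof
      assume "prefix v t" thus ?thesis using prefix_same_cases[OF rt] by blast
    next
      assume "prefix t v" thus ?thesis using rt prefix_order.trans by blast
    qed
  qed
  have "r \<in> T" using dc t rt ch unfolding downwards_closed_def is_chain_in_def by blast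
  hence "is_chain_in T (insert r b)"
    using ch cmp unfolding is_chain_in_def by (auto simp del: insert_subset)
  thus ?thesis using mx by blast
qed

lemma branch_unique_node_of_length:
  assumes dc: "downwards_closed T" and b: "b \<in> branches T"
  shows "\<exists>!s. s \<in> b \<and> length s = k"
proof -
  have uniq: "s = u" if "s \<in> b" "u \<in> b" "length s = length u" for s u
    using branchesD(3)[OF b that(1,2)]
  proof
    assume "prefix s u" thus ?thesis using that(3) by (rule prefix_same_length_eq)
  next
    assume "prefix u s" thus ?thesis using that(3)[symmetric] by (rule prefix_same_length_eq[symmetric])
  qed
  have "\<exists>u\<in>b. k \<le> length u"
  proof (rule ccontr)
    assume "\<not> ?thesis"
    hence "length ` b \<subseteq> {..<k}" by auto
    hence "finite (length ` b)" by (rule finite_subset) simp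
    moreover have "inj_on length b" using uniq by (meson inj_onI)
    ultimately have "finite b" by (rule finite_imageD)
    thus False using branchesD(2)[OF b] by contradiction
  qed
  then obtain u where u: "u \<in> b" "k \<le> length u" by blast
  have "take k u \<in> b" using branch_prefix_closed[OF dc b u(1) take_is_prefix] .
  moreover have "length (take k u) = k" using u(2) by simp
  ultimately show ?thesis using uniq by (intro ex1I[of _ "take k u"]) auto
qed

definition branch_node :: "nat list set \<Rightarrow> nat \<Rightarrow> nat list" where
  "branch_node b k = (THE s. s \<in> b \<and> length s = k)"

lemma
  assumes dc: "downwards_closed T" and b: "b \<in> branches T"
  shows branch_node_in: "branch_node b k \<in> b"
    and length_branch_node [simp]: "length (branch_node b k) = k"
  using theI'[OF branch_unique_node_of_length[OF dc b]] unfolding branch_node_def by blast+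

lemma prefix_branch_node_iff:
  assumes dc: "downwards_closed T" and b: "b \<in> branches T" and k: "length s \<le> k"
  shows "prefix s (branch_node b k) \<longleftrightarrow> s \<in> b"
proof
  assume "prefix s (branch_node b k)"
  thus "s \<in> b" using branch_prefix_closed[OF dc b branch_node_in[OF dc b]] by blast
next
  assume s: "s \<in> b"
  have "prefix s (branch_node b k) \<or> prefix (branch_node b k) s"
    using branchesD(3)[OF b s branch_node_in[OF dc b]] .
  moreover have "branch_node b k = s" if "prefix (branch_node b k) s"
    using that k prefix_length_le[OF that] prefix_same_length_eq[OF that] dc b by simp
  ultimately show "prefix s (branch_node b k)" by auto
qed

lemma prefix_branch_node_mono:
  assumes dc: "downwards_closed T" and b: "b \<in> branches T" and jk: "j \<le> k"
  shows "prefix (branch_node b j) (branch_node b k)"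
  using prefix_branch_node_iff[OF dc b, of "branch_node b j" k] branch_node_in[OF dc b, of j] jk dc b
  by simp

lemma code_branch_node_ge:
  assumes "downwards_closed T" "b \<in> branches T"
  shows "k \<le> code (branch_node b k)"
  using length_le_code[of "branch_node b k"] assms by simp

lemma next_node_below:
  assumes dc: "downwards_closed T" and w: "w \<in> tree_closure T"
    and wt: "wedge_le (Inl t) w" and ne: "w \<noteq> Inl t"
  shows "\<exists>m. wedge_le (Inl (t @ [m])) w \<and> t @ [m] \<in> T"
  using w
proof (cases rule: tree_closure_cases)
  case (1 w')
  obtain z where z: "w' = t @ z" using wt 1 by (auto simp: prefix_def)
  then obtain m z' where "z = m # z'" using ne 1 by (cases z) auto
  hence p: "prefix (t @ [m]) w'" using z by (simp add: prefix_def)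
  hence "t @ [m] \<in> T" using dc 1 unfolding downwards_closed_def by blast
  thus ?thesis using p 1 by auto
next
  case (2 b)
  define s where "s = branch_node b (Suc (length t))"
  have "t \<in> b" using wt 2 by simp
  hence "prefix t s" using prefix_branch_node_iff[OF dc 2(2)] by (simp add: s_def)
  moreover have "length s = Suc (length t)" using dc 2(2) by (simp add: s_def)
  ultimately obtain z where "s = t @ z" "length z = 1" by (auto simp: prefix_def)
  then obtain m where "s = t @ [m]" by (metis length_0_conv length_Suc_conv One_nat_def)
  moreover have "s \<in> b" "b \<subseteq> T"
    using branch_node_in[OF dc 2(2)] branchesD(1)[OF 2(2)] unfolding s_def by auto
  ultimately show ?thesis using 2 by auto
qed

definition wedge_cone :: "nat list set \<Rightarrow> nat list \<Rightarrow> (nat list + nat list set) set" where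
  "wedge_cone T t = {u \<in> tree_closure T. wedge_le (Inl t) u}"

lemma
  assumes "t \<in> T"
  shows openin_wedge_cone: "openin (coarse_wedge_topology T) (wedge_cone T t)"
    and openin_wedge_cone_compl: "openin (coarse_wedge_topology T) (tree_closure T - wedge_cone T t)"
proof -
  let ?X = "topology_generated_by ((wedge_cone T) ` T \<union> (\<lambda>t. tree_closure T - wedge_cone T t) ` T)"
  have X: "coarse_wedge_topology T = subtopology ?X (tree_closure T)"
    by (simp add: coarse_wedge_topology_def wedge_cone_def)
  have "openin ?X (wedge_cone T t)" "openin ?X (tree_closure T - wedge_cone T t)"
    using assms by (auto intro: topology_generated_by_Basis)
  moreover have "wedge_cone T t \<subseteq> tree_closure T" by (auto simp: wedge_cone_def)
  ultimately show "openin (coarse_wedge_topology T) (wedge_cone T t)"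
      "openin (coarse_wedge_topology T) (tree_closure T - wedge_cone T t)"
    unfolding X openin_subtopology by (metis Diff_subset inf.absorb_iff1)+
qed

lemma topspace_coarse_wedge_topology: "topspace (coarse_wedge_topology T) = tree_closure T"
proof -
  let ?SB = "(wedge_cone T) ` T \<union> (\<lambda>t. tree_closure T - wedge_cone T t) ` T"
  have "tree_closure T \<subseteq> \<Union>?SB"
  proof
    fix u assume u: "u \<in> tree_closure T"
    obtain t where t: "t \<in> T"
      using u
    proof (cases rule: tree_closure_cases)
      case (2 b)
      then obtain t where "t \<in> b" using branchesD(2)[OF 2(2)] by (metis finite.emptyI ex_in_conv)
      thus thesis using that branchesD(1)[OF 2(2)] by blast
    qed
    show "u \<in> \<Union>?SB"
    proof (cases "u \<in> wedge_cone T t")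
      case True thus ?thesis using t by blast
    next
      case False thus ?thesis using t u by blast
    qed
  qed
  moreover have "\<Union>?SB \<subseteq> tree_closure T" by (auto simp: wedge_cone_def)
  ultimately show ?thesis
    by (simp add: coarse_wedge_topology_def wedge_cone_def[symmetric] Int_absorb1)
qed

locale biorthogonal_construction =
  fixes S :: "('a::real_normed_vector \<Rightarrow>\<^sub>L real) set" and dseq :: "nat \<Rightarrow> 'a" and \<rho> :: real
  assumes rho: "0 < \<rho>" "\<rho> < 1"
    and dense: "\<forall>y e. e > 0 \<longrightarrow> (\<exists>i. norm (y - dseq i) < e)"
    and S_ne: "S \<noteq> {}" and S_norm: "\<forall>f\<in>S. norm f = 1"
    and S_step: "\<forall>f\<in>S. \<forall>Z \<tau> U. finite Z \<longrightarrow> \<tau> > 0 \<longrightarrow> finite U \<longrightarrow>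
       (\<exists>g\<in>S. (\<forall>y\<in>Z. \<bar>blinfun_apply g y - blinfun_apply f y\<bar> < \<tau>) \<and> (\<forall>w\<in>span U. 1 - \<rho>/8 \<le> norm (g - w)))"
begin

definition lam :: real where "lam = 1 + \<rho>/2"

lemma lam_pos: "lam > 0"
  using rho by (simp add: lam_def)

lemma one_less_lam_far: "1 < lam * (1 - \<rho>/8)"
proof -
  have "lam * (1 - \<rho>/8) = 1 + 3*\<rho>/8 - \<rho>*\<rho>/16" unfolding lam_def by (simp add: field_simps)
  moreover have "\<rho>*\<rho>/16 < 3*\<rho>/8" using rho by (simp add: field_simps)
  ultimately show ?thesis by linarith
qed

text \<open>The new \<open>z\<close> is \<open>lam (g - g\<^sub>p)\<close>, with \<open>p\<close> the parent of the node coded by \<open>n\<close>, up to a small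
  correction in the span of the earlier \<open>Zf k\<close>; summed along a path these telescope to \<open>lam g\<close>
  plus a small error. The bound on the dense points makes the sums converge along branches.\<close>
definition step_ok :: "nat \<Rightarrow> (nat \<Rightarrow> ('a \<Rightarrow>\<^sub>L real)) \<Rightarrow> (nat \<Rightarrow> ('a \<Rightarrow>\<^sub>L real)) \<Rightarrow> (nat \<Rightarrow> 'a)
    \<Rightarrow> ('a \<Rightarrow>\<^sub>L real) \<Rightarrow> ('a \<Rightarrow>\<^sub>L real) \<Rightarrow> 'a \<Rightarrow> bool" where
  "step_ok n G Zf Xf g z x \<longleftrightarrow>
     (let gp = (if n = 0 then 0 else G (parent_code n)) in
     g \<in> S \<and> z - lam *\<^sub>R (g - gp) \<in> span (Zf ` {..<n}) \<and>
     norm (z - lam *\<^sub>R (g - gp)) \<le> \<rho>/2 * (1/2)^(Suc n) \<and>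
     (n = 0 \<or> (\<forall>i\<le>n. \<bar>blinfun_apply z (dseq i)\<bar> \<le> (1/2)^n)) \<and>
     (\<forall>k<n. blinfun_apply z (Xf k) = 0 \<and> blinfun_apply (Zf k) x = 0) \<and>
     blinfun_apply z x = 1 \<and> norm x \<le> 1)"

definition stage_ok :: "nat \<Rightarrow> (nat \<Rightarrow> ('a \<Rightarrow>\<^sub>L real)) \<Rightarrow> (nat \<Rightarrow> ('a \<Rightarrow>\<^sub>L real)) \<Rightarrow> (nat \<Rightarrow> 'a) \<Rightarrow> bool" where
  "stage_ok n G Zf Xf \<longleftrightarrow> (\<forall>k<n. G k \<in> S) \<and>
     (\<forall>i<n. \<forall>j<n. blinfun_apply (Zf i) (Xf j) = (if i = j then 1 else 0)) \<and>
     (\<forall>k<n. Zf k \<in> span (G ` {..<Suc k}))"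

lemma span_Zf_subset:
  assumes "\<forall>k<n. Zf k \<in> span (G ` {..<Suc k})"
  shows "span (Zf ` {..<n}) \<subseteq> span (G ` {..<n})"
proof -
  have "Zf k \<in> span (G ` {..<n})" if "k < n" for k
    using assms that span_mono[of "G ` {..<Suc k}" "G ` {..<n}"] by fastforce
  hence "Zf ` {..<n} \<subseteq> span (G ` {..<n})" by blast
  thus ?thesis by (metis span_mono span_span)
qed

lemma kernel_vector_exists:
  assumes stage: "stage_ok n G Zf Xf" and far: "\<forall>w\<in>span (Zf ` {..<n}). 1 < norm (z - w)"
  shows "\<exists>x. (\<forall>k<n. blinfun_apply (Zf k) x = 0) \<and> blinfun_apply z x = 1 \<and> norm x \<le> 1"
proof -
  have bio: "\<forall>i\<in>{..<n}. \<forall>j\<in>{..<n}. blinfun_apply (Zf i) (Xf j) = (if i = j then 1 else 0)"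
    using stage by (simp add: stage_ok_def)
  obtain y where y: "\<forall>i\<in>{..<n}. blinfun_apply (Zf i) y = 0" "norm y \<le> 1" "1 \<le> blinfun_apply z y"
    using norming_vector_in_common_kernel[OF finite_lessThan bio _ far] by auto
  define x where "x = (1 / blinfun_apply z y) *\<^sub>R y"
  have "norm x = norm y / blinfun_apply z y" using y(3) by (simp add: x_def)
  also have "\<dots> \<le> norm y" using y(3) by (simp add: divide_le_eq mult_le_cancel_left1)
  finally show ?thesis
    using y by (intro exI[of _ x]) (auto simp: x_def blinfun.scaleR_right)
qed

lemma step_ok_root:
  assumes stage: "stage_ok 0 G Zf Xf"
  shows "\<exists>g z x. step_ok 0 G Zf Xf g z x"
proof -
  obtain g where g: "g \<in> S" using S_ne by blast
  have "1 < norm (lam *\<^sub>R g)" using S_norm g rho by (simp add: lam_def)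
  then obtain x where "blinfun_apply (lam *\<^sub>R g) x = 1" "norm x \<le> 1"
    using kernel_vector_exists[OF stage, of "lam *\<^sub>R g"] by auto
  hence "step_ok 0 G Zf Xf g (lam *\<^sub>R g) x"
    using g rho unfolding step_ok_def by (simp add: span_zero)
  thus ?thesis by blast
qed

lemma scaled_far_from_span:
  assumes far: "\<forall>w\<in>span U. 1 - \<rho>/8 \<le> norm (g - w)" and f: "f \<in> span U" and d: "d \<in> span U"
    and w: "w \<in> span U"
  shows "1 < norm (lam *\<^sub>R (g - f) + d - w)"
proof -
  define v where "v = (1/lam) *\<^sub>R (lam *\<^sub>R f - d + w)"
  have "v \<in> span U" unfolding v_def using f d w by (intro span_scale span_add span_diff) auto
  moreover have "lam *\<^sub>R (g - f) + d - w = lam *\<^sub>R (g - v)"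
    using lam_pos by (simp add: v_def algebra_simps)
  ultimately have "lam * (1 - \<rho>/8) \<le> norm (lam *\<^sub>R (g - f) + d - w)"
    using far lam_pos by (auto intro: mult_left_mono)
  thus ?thesis using one_less_lam_far by linarith
qed

lemma step_ok_child:
  assumes stage: "stage_ok n G Zf Xf" and n: "n \<noteq> 0"
  shows "\<exists>g z x. step_ok n G Zf Xf g z x"
proof -
  have inS: "\<forall>k<n. G k \<in> S" and bio: "\<forall>i<n. \<forall>j<n. blinfun_apply (Zf i) (Xf j) = (if i = j then 1 else 0)"
    and zspan: "\<forall>k<n. Zf k \<in> span (G ` {..<Suc k})" using stage by (auto simp: stage_ok_def)
  define f where "f = G (parent_code n)"
  have pn: "parent_code n < n" using parent_code_less[OF n] .
  define A where "A = (\<Sum>k<n. norm (Zf k))"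
  define R where "R = (\<Sum>i\<le>n. norm (dseq i))"
  define \<eta> :: real where "\<eta> = \<rho>/2 * (1/2)^(Suc n)"
  have AR: "A \<ge> 0" "R \<ge> 0" unfolding A_def R_def by (auto intro: sum_nonneg)
  obtain \<tau> where \<tau>: "\<tau> > 0" and \<tau>A: "lam * \<tau> * A \<le> \<eta>"
    and \<tau>AR: "lam * \<tau> + lam * \<tau> * A * R \<le> (1/2)^n"
    using small_parameter_exists[OF lam_pos AR, of \<eta> "(1/2)^n"] rho by (auto simp: \<eta>_def)
  define U where "U = G ` {..<n}"
  define Z where "Z = dseq ` {..n} \<union> Xf ` {..<n}"
  have "f \<in> S" using inS pn by (simp add: f_def)
  hence "\<exists>g\<in>S. (\<forall>y\<in>Z. \<bar>blinfun_apply g y - blinfun_apply f y\<bar> < \<tau>) \<and> (\<forall>w\<in>span U. 1 - \<rho>/8 \<le> norm (g - w))"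
    using \<tau> by (intro S_step[rule_format]) (simp_all add: Z_def U_def)
  then obtain g where g: "g \<in> S" "\<forall>y\<in>Z. \<bar>blinfun_apply g y - blinfun_apply f y\<bar> < \<tau>"
      "\<forall>w\<in>span U. 1 - \<rho>/8 \<le> norm (g - w)" by blast
  define \<phi> where "\<phi> = lam *\<^sub>R (g - f)"
  have \<phi>: "\<bar>blinfun_apply \<phi> y\<bar> \<le> lam * \<tau>" if "y \<in> Z" for y
  proof -
    have "\<bar>blinfun_apply \<phi> y\<bar> = lam * \<bar>blinfun_apply g y - blinfun_apply f y\<bar>"
      using lam_pos by (simp add: \<phi>_def blinfun.scaleR_left blinfun.diff_left abs_mult)
    also have "\<dots> \<le> lam * \<tau>" using g(2) that lam_pos by (intro mult_left_mono) auto
    finally show ?thesis .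
  qed
  define d where "d = - (\<Sum>k<n. blinfun_apply \<phi> (Xf k) *\<^sub>R Zf k)"
  have d: "d \<in> span (Zf ` {..<n})" "\<forall>j<n. blinfun_apply (\<phi> + d) (Xf j) = 0"
    "norm d \<le> lam * \<tau> * A"
    using biorthogonal_correction[OF bio, of \<phi> "lam * \<tau>"] \<phi> unfolding d_def A_def Z_def by auto
  define z where "z = \<phi> + d"
  have zd: "\<bar>blinfun_apply z (dseq i)\<bar> \<le> (1/2)^n" if "i \<le> n" for i
  proof -
    have "\<bar>blinfun_apply z (dseq i)\<bar> \<le> \<bar>blinfun_apply \<phi> (dseq i)\<bar> + \<bar>blinfun_apply d (dseq i)\<bar>"
      by (simp add: z_def blinfun.add_left abs_triangle_ineq)
    also have "\<bar>blinfun_apply d (dseq i)\<bar> \<le> norm d * norm (dseq i)"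
      using norm_blinfun[of d "dseq i"] by simp
    also have "norm d * norm (dseq i) \<le> (lam * \<tau> * A) * R"
      using d(3) that AR lam_pos \<tau> by (intro mult_mono) (auto simp: R_def intro: member_le_sum)
    also have "\<bar>blinfun_apply \<phi> (dseq i)\<bar> \<le> lam * \<tau>" using \<phi> that by (simp add: Z_def)
    finally show ?thesis using \<tau>AR by linarith
  qed
  have "\<forall>w\<in>span (Zf ` {..<n}). 1 < norm (z - w)"
  proof
    fix w assume "w \<in> span (Zf ` {..<n})"
    moreover have "f \<in> span U" using pn by (auto simp: U_def f_def intro: span_base)
    ultimately show "1 < norm (z - w)"
      using scaled_far_from_span[OF g(3)] d(1) span_Zf_subset[OF zspan] unfolding z_def \<phi>_def U_def by blast
  qed
  then obtain x where x: "\<forall>k<n. blinfun_apply (Zf k) x = 0" "blinfun_apply z x = 1" "norm x \<le> 1"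
    using kernel_vector_exists[OF stage] by blast
  have "norm (z - lam *\<^sub>R (g - f)) \<le> \<rho>/2 * (1/2)^(Suc n)"
    using d(3) \<tau>A by (simp add: z_def \<phi>_def \<eta>_def)
  moreover have "z - lam *\<^sub>R (g - f) \<in> span (Zf ` {..<n})" using d(1) by (simp add: z_def \<phi>_def)
  ultimately have "step_ok n G Zf Xf g z x"
    unfolding step_ok_def Let_def using n g(1) d(2) x zd by (simp add: f_def z_def)
  thus ?thesis by blast
qed

lemma step_ok_exists: "stage_ok n G Zf Xf \<Longrightarrow> \<exists>g z x. step_ok n G Zf Xf g z x"
  using step_ok_root step_ok_child by (cases "n = 0") auto

lemma span_step:
  assumes Zf: "\<forall>k<n. Zf k \<in> span (G ` {..<Suc k})" and z: "z - lam *\<^sub>R (g - gp) \<in> span (Zf ` {..<n})"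
    and gp: "gp = 0 \<or> gp \<in> G ` {..<n}"
  shows "z \<in> span (insert g (G ` {..<n}))"
proof -
  have "span (Zf ` {..<n}) \<subseteq> span (insert g (G ` {..<n}))"
    using span_Zf_subset[OF Zf] span_mono[of "G ` {..<n}" "insert g (G ` {..<n})"] by blast
  hence "z - lam *\<^sub>R (g - gp) \<in> span (insert g (G ` {..<n}))" using z by blast
  moreover have "g \<in> span (insert g (G ` {..<n}))" "gp \<in> span (insert g (G ` {..<n}))"
    using gp by (auto intro: span_base simp: span_zero)
  hence "lam *\<^sub>R (g - gp) \<in> span (insert g (G ` {..<n}))" by (intro span_scale span_diff)
  ultimately show ?thesis using span_add by fastforce
qed

lemma stage_ok_step:
  assumes stage: "stage_ok n G Zf Xf" and gd: "step_ok n G Zf Xf g z x"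
  shows "stage_ok (Suc n) (G(n := g)) (Zf(n := z)) (Xf(n := x))"
proof -
  define gp where "gp = (if n = 0 then 0 else G (parent_code n))"
  have gd': "g \<in> S" "z - lam *\<^sub>R (g - gp) \<in> span (Zf ` {..<n})"
    "\<forall>k<n. blinfun_apply z (Xf k) = 0 \<and> blinfun_apply (Zf k) x = 0" "blinfun_apply z x = 1"
    using gd unfolding step_ok_def Let_def gp_def by blast+
  have i1: "\<forall>k<n. G k \<in> S" and i2: "\<forall>i<n. \<forall>j<n. blinfun_apply (Zf i) (Xf j) = (if i = j then 1 else 0)"
    and i3: "\<forall>k<n. Zf k \<in> span (G ` {..<Suc k})" using stage unfolding stage_ok_def by blast+
  have a: "\<forall>k<Suc n. (G(n := g)) k \<in> S" using i1 gd'(1) by (auto simp: less_Suc_eq)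
  have b: "\<forall>i<Suc n. \<forall>j<Suc n. blinfun_apply ((Zf(n := z)) i) ((Xf(n := x)) j) = (if i = j then 1 else 0)"
    using i2 gd'(3,4) by (auto simp: less_Suc_eq)
  have c: "\<forall>k<Suc n. (Zf(n := z)) k \<in> span ((G(n := g)) ` {..<Suc k})"
  proof (intro allI impI)
    fix k assume k: "k < Suc n"
    show "(Zf(n := z)) k \<in> span ((G(n := g)) ` {..<Suc k})"
    proof (cases "k < n")
      case True
      have "(G(n := g)) ` {..<Suc k} = G ` {..<Suc k}" using True by (auto simp: image_def)
      thus ?thesis using True i3 by simp
    next
      case False
      hence "k = n" using k by simp
      moreover have "(G(n := g)) ` {..<Suc n} = insert g (G ` {..<n})" by (auto simp: less_Suc_eq)
      moreover have "gp = 0 \<or> gp \<in> G ` {..<n}" using parent_code_less[of n] by (auto simp: gp_def)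
      ultimately show ?thesis using span_step[OF i3 gd'(2)] by simp
    qed
  qed
  show ?thesis unfolding stage_ok_def using a b c by blast
qed

definition pick where "pick n G Zf Xf = (SOME p. step_ok n G Zf Xf (fst p) (fst (snd p)) (snd (snd p)))"

primrec build :: "nat \<Rightarrow> (nat \<Rightarrow> ('a \<Rightarrow>\<^sub>L real)) \<times> (nat \<Rightarrow> ('a \<Rightarrow>\<^sub>L real)) \<times> (nat \<Rightarrow> 'a)" where
  "build 0 = (\<lambda>_. 0, \<lambda>_. 0, \<lambda>_. 0)"
| "build (Suc n) = (let G = fst (build n); Zf = fst (snd (build n)); Xf = snd (snd (build n));
     p = pick n G Zf Xf in (G(n := fst p), Zf(n := fst (snd p)), Xf(n := snd (snd p))))"

definition "BG n = fst (build n)"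
definition "BZ n = fst (snd (build n))"
definition "BX n = snd (snd (build n))"

lemma build_Suc_simps:
  "BG (Suc n) = (BG n)(n := fst (pick n (BG n) (BZ n) (BX n)))"
  "BZ (Suc n) = (BZ n)(n := fst (snd (pick n (BG n) (BZ n) (BX n))))"
  "BX (Suc n) = (BX n)(n := snd (snd (pick n (BG n) (BZ n) (BX n))))"
  by (simp_all add: BG_def BZ_def BX_def Let_def)

lemma step_ok_pick:
  assumes "stage_ok n G Zf Xf"
  shows "step_ok n G Zf Xf (fst (pick n G Zf Xf)) (fst (snd (pick n G Zf Xf))) (snd (snd (pick n G Zf Xf)))"
proof -
  obtain g z x where gzx: "step_ok n G Zf Xf g z x" using step_ok_exists[OF assms] by blast
  show ?thesis unfolding pick_def
    by (rule someI[of "\<lambda>p. step_ok n G Zf Xf (fst p) (fst (snd p)) (snd (snd p))" "(g, z, x)"])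
      (simp add: gzx)
qed

lemma stage_ok_build: "stage_ok n (BG n) (BZ n) (BX n)"
proof (induction n)
  case (Suc n)
  show ?case unfolding build_Suc_simps by (rule stage_ok_step[OF Suc.IH step_ok_pick[OF Suc.IH]])
qed (simp add: stage_ok_def)

lemma step_ok_build: "step_ok n (BG n) (BZ n) (BX n) (BG (Suc n) n) (BZ (Suc n) n) (BX (Suc n) n)"
  using step_ok_pick[OF stage_ok_build] by (simp add: build_Suc_simps)

definition "gseq k = BG (Suc k) k"
definition "zseq k = BZ (Suc k) k"
definition "xseq k = BX (Suc k) k"

lemma build_stable: "k < n \<Longrightarrow> BG n k = gseq k \<and> BZ n k = zseq k \<and> BX n k = xseq k"
proof (induction n)
  case 0 thus ?case by simp
next
  case (Suc n)
  show ?case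
  proof (cases "k < n")
    case True thus ?thesis using Suc.IH by (simp add: build_Suc_simps)
  next
    case False
    hence "k = n" using Suc.prems by simp
    thus ?thesis by (simp add: gseq_def zseq_def xseq_def)
  qed
qed

lemma stage_ok_seq: "stage_ok n gseq zseq xseq"
proof -
  have "stage_ok n (BG n) (BZ n) (BX n)" by (rule stage_ok_build)
  thus ?thesis unfolding stage_ok_def using build_stable[of _ n] by simp
qed

definition "gseq_parent k = (if k = 0 then 0 else gseq (parent_code k))"

lemma step_ok_seq: "step_ok k gseq zseq xseq (gseq k) (zseq k) (xseq k)"
proof -
  have g: "step_ok k (BG k) (BZ k) (BX k) (gseq k) (zseq k) (xseq k)"
    using step_ok_build[of k] by (simp add: gseq_def zseq_def xseq_def)
  have e1: "BZ k ` {..<k} = zseq ` {..<k}" using build_stable[of _ k] by auto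
  have e2: "(if k = 0 then 0 else BG k (parent_code k)) = (if k = 0 then 0 else gseq (parent_code k))"
    using build_stable[of "parent_code k" k] parent_code_less[of k] by auto
  have e3: "\<forall>j<k. BX k j = xseq j \<and> BZ k j = zseq j" using build_stable[of _ k] by auto
  show ?thesis using g unfolding step_ok_def Let_def e1 e2 using e3 by simp
qed

lemma gseq_in_S: "gseq k \<in> S" using step_ok_seq[of k] unfolding step_ok_def Let_def by blast
lemma norm_gseq: "norm (gseq k) = 1" using gseq_in_S S_norm by blast
lemma zseq_xseq_biorthogonal: "blinfun_apply (zseq i) (xseq j) = (if i = j then 1 else 0)"
  using stage_ok_seq[of "Suc (max i j)"] unfolding stage_ok_def by simp
lemma norm_zseq_defect_le: "norm (zseq k - lam *\<^sub>R (gseq k - gseq_parent k)) \<le> \<rho>/2 * (1/2)^(Suc k)"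
  using step_ok_seq[of k] unfolding step_ok_def Let_def gseq_parent_def by blast
lemma zseq_small_on_dense: "k \<noteq> 0 \<Longrightarrow> i \<le> k \<Longrightarrow> \<bar>blinfun_apply (zseq k) (dseq i)\<bar> \<le> (1/2)^k"
  using step_ok_seq[of k] unfolding step_ok_def Let_def by blast
lemma norm_xseq_le: "norm (xseq k) \<le> 1"
  using step_ok_seq[of k] unfolding step_ok_def Let_def by blast
lemma norm_gseq_parent_le: "norm (gseq_parent k) \<le> 1" by (simp add: gseq_parent_def norm_gseq)

definition node_fun :: "nat list \<Rightarrow> ('a \<Rightarrow>\<^sub>L real)" where
  "node_fun t = (\<Sum>r\<in>{r. prefix r t}. zseq (code r))"

definition zseq_defect where "zseq_defect k = zseq k - lam *\<^sub>R (gseq k - gseq_parent k)"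

lemma node_fun_Nil: "node_fun [] = zseq 0" by (simp add: node_fun_def)

lemma node_fun_snoc: "node_fun (t @ [m]) = node_fun t + zseq (code (t @ [m]))"
  unfolding node_fun_def prefixes_set_snoc sum.insert[OF finite_prefixes_set snoc_not_in_prefixes_set] by (simp add: add.commute)

lemma gseq_parent_snoc: "gseq_parent (code (t @ [m])) = gseq (code t)"
proof -
  have "0 < code (t @ [m])" using code_less_code_snoc[of t m] by linarith
  thus ?thesis by (simp add: gseq_parent_def)
qed

lemma node_fun_decomp: "node_fun t = lam *\<^sub>R gseq (code t) + (\<Sum>r\<in>{r. prefix r t}. zseq_defect (code r))"
proof (induction t rule: rev_induct)
  case Nil
  have "{r. prefix r []} = {[]}" by auto
  thus ?case by (simp add: node_fun_Nil zseq_defect_def gseq_parent_def)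
next
  case (snoc m t)
  have s: "(\<Sum>r\<in>{r. prefix r (t @ [m])}. zseq_defect (code r)) = zseq_defect (code (t @ [m])) + (\<Sum>r\<in>{r. prefix r t}. zseq_defect (code r))"
    unfolding prefixes_set_snoc sum.insert[OF finite_prefixes_set snoc_not_in_prefixes_set] by simp
  show ?case unfolding node_fun_snoc snoc.IH s
    by (simp add: zseq_defect_def gseq_parent_snoc algebra_simps)
qed

lemma norm_sum_defects_le: "norm (\<Sum>r\<in>{r. prefix r t}. zseq_defect (code r)) \<le> \<rho>/2"
proof -
  have "norm (\<Sum>r\<in>{r. prefix r t}. zseq_defect (code r)) \<le> (\<Sum>r\<in>{r. prefix r t}. norm (zseq_defect (code r)))"
    by (rule norm_sum)
  also have "\<dots> \<le> (\<Sum>r\<in>{r. prefix r t}. \<rho>/4 * (1/2)^(code r))"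
  proof (rule sum_mono)
    fix r
    have "norm (zseq_defect (code r)) \<le> \<rho>/2 * (1/2)^(Suc (code r))" using norm_zseq_defect_le by (simp add: zseq_defect_def)
    thus "norm (zseq_defect (code r)) \<le> \<rho>/4 * (1/2)^(code r)" by simp
  qed
  also have "\<dots> = \<rho>/4 * (\<Sum>k\<in>code ` {r. prefix r t}. (1/2)^k)"
    by (simp add: sum_distrib_left sum.reindex[OF inj_on_code])
  also have "\<dots> \<le> \<rho>/4 * (2 * (1/2)^0)"
    using rho finite_prefixes_set by (intro mult_left_mono sum_half_powers_le) auto
  finally show ?thesis by simp
qed

lemma norm_node_fun_le: "norm (node_fun t) \<le> 1 + \<rho>"
proof -
  have "norm (node_fun t) \<le> norm (lam *\<^sub>R gseq (code t)) + norm (\<Sum>r\<in>{r. prefix r t}. zseq_defect (code r))"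
    unfolding node_fun_decomp by (rule norm_triangle_ineq)
  also have "\<dots> \<le> lam + \<rho>/2" using norm_sum_defects_le lam_pos norm_gseq by simp
  finally show ?thesis by (simp add: lam_def)
qed

lemma node_fun_xseq: "blinfun_apply (node_fun t) (xseq (code s)) = (if prefix s t then 1 else 0)"
proof -
  have "blinfun_apply (node_fun t) (xseq (code s)) = (\<Sum>r\<in>{r. prefix r t}. blinfun_apply (zseq (code r)) (xseq (code s)))"
    by (simp add: node_fun_def blinfun.sum_left)
  also have "\<dots> = (\<Sum>r\<in>{r. prefix r t}. if r = s then 1 else 0)"
    by (rule sum.cong) (auto simp: zseq_xseq_biorthogonal code_eq_iff)
  also have "\<dots> = (if prefix s t then 1 else 0)" by (simp add: sum.delta[OF finite_prefixes_set])
  finally show ?thesis .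
qed

lemma node_fun_close:
  assumes su: "prefix s u" and i: "i \<le> code s + 1"
  shows "\<bar>blinfun_apply (node_fun u) (dseq i) - blinfun_apply (node_fun s) (dseq i)\<bar> \<le> (1/2)^(code s)"
proof -
  define P where "P = {r. prefix r u} - {r. prefix r s}"
  have sub: "{r. prefix r s} \<subseteq> {r. prefix r u}" using su by (auto intro: prefix_order.trans)
  have finP: "finite P" unfolding P_def using finite_prefixes_set[of u] by simp
  have cr: "code s < code r" if "r \<in> P" for r
  proof -
    have r: "prefix r u" "\<not> prefix r s" using that by (auto simp: P_def)
    have "prefix s r" using prefix_same_cases[OF r(1) su] r(2) by blast
    moreover have "r \<noteq> s" using r(2) by auto
    ultimately show ?thesis by (metis code_strict_prefix_less)
  qed
  have "node_fun u - node_fun s = (\<Sum>r\<in>P. zseq (code r))"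
    unfolding node_fun_def P_def using sum_diff[OF finite_prefixes_set sub, of "\<lambda>r. zseq (code r)"] by simp
  hence "blinfun_apply (node_fun u - node_fun s) (dseq i) = blinfun_apply (\<Sum>r\<in>P. zseq (code r)) (dseq i)" by simp
  hence "blinfun_apply (node_fun u) (dseq i) - blinfun_apply (node_fun s) (dseq i) = (\<Sum>r\<in>P. blinfun_apply (zseq (code r)) (dseq i))"
    by (simp add: blinfun.diff_left blinfun.sum_left)
  hence "\<bar>blinfun_apply (node_fun u) (dseq i) - blinfun_apply (node_fun s) (dseq i)\<bar> \<le> (\<Sum>r\<in>P. \<bar>blinfun_apply (zseq (code r)) (dseq i)\<bar>)"
    using sum_abs[of "\<lambda>r. blinfun_apply (zseq (code r)) (dseq i)" P] by simp
  also have "\<dots> \<le> (\<Sum>r\<in>P. (1/2)^(code r))"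
  proof (rule sum_mono)
    fix r assume r: "r \<in> P"
    have "code r \<noteq> 0" "i \<le> code r" using cr[OF r] i by auto
    thus "\<bar>blinfun_apply (zseq (code r)) (dseq i)\<bar> \<le> (1/2)^(code r)" by (rule zseq_small_on_dense)
  qed
  also have "\<dots> = (\<Sum>k\<in>code ` P. (1/2::real)^k)" by (simp add: sum.reindex[OF inj_on_code])
  also have "\<dots> \<le> 2 * (1/2)^(Suc (code s))"
    using finP cr by (intro sum_half_powers_le) (auto simp: Suc_le_eq)
  finally show ?thesis by simp
qed

lemma norm_zseq_le: "norm (zseq k) \<le> 4"
proof -
  have "zseq k = zseq_defect k + lam *\<^sub>R (gseq k - gseq_parent k)" by (simp add: zseq_defect_def)
  hence "norm (zseq k) \<le> norm (zseq_defect k) + norm (lam *\<^sub>R (gseq k - gseq_parent k))"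
    using norm_triangle_ineq[of "zseq_defect k" "lam *\<^sub>R (gseq k - gseq_parent k)"] by simp
  also have "norm (zseq_defect k) \<le> 1"
  proof -
    have "norm (zseq_defect k) \<le> \<rho>/2 * (1/2)^(Suc k)" using norm_zseq_defect_le by (simp add: zseq_defect_def)
    also have "\<dots> \<le> \<rho>/2 * 1"
    proof -
      have "(1/2::real)^(Suc k) \<le> 1" by (rule power_le_one) auto
      thus ?thesis using rho by (intro mult_left_mono) auto
    qed
    finally show ?thesis using rho by simp
  qed
  also have "norm (lam *\<^sub>R (gseq k - gseq_parent k)) \<le> lam * 2"
  proof -
    have "norm (gseq k - gseq_parent k) \<le> norm (gseq k) + norm (gseq_parent k)" by (rule norm_triangle_ineq4)
    hence "norm (gseq k - gseq_parent k) \<le> 2" using norm_gseq norm_gseq_parent_le[of k] by simp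
    thus ?thesis using lam_pos by simp
  qed
  finally show ?thesis using rho by (simp add: lam_def)
qed

lemma zseq_weak_star_null:
  assumes e: "e > 0"
  shows "\<exists>N. \<forall>k\<ge>N. \<bar>blinfun_apply (zseq k) y\<bar> < e"
proof -
  obtain i where i: "norm (y - dseq i) < e / 16" using dense[rule_format, of "e/16" y] e by auto
  obtain N0 where N0: "(1/2::real)^N0 < e/2" using real_arch_pow_inv[of "e/2" "1/2::real"] e by auto
  define N where "N = max (max N0 i) 1"
  have "\<bar>blinfun_apply (zseq k) y\<bar> < e" if k: "k \<ge> N" for k
  proof -
    have "\<bar>blinfun_apply (zseq k) y\<bar> \<le> \<bar>blinfun_apply (zseq k) (dseq i)\<bar> + 4 * norm (y - dseq i)"
    proof -
      have "\<bar>blinfun_apply (zseq k) y - blinfun_apply (zseq k) (dseq i)\<bar> \<le> 4 * norm (y - dseq i)"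
        using blinfun_apply_diff_le[of "zseq k" y "dseq i"] norm_zseq_le[of k] by (meson mult_right_mono norm_ge_zero order_trans)
      thus ?thesis by linarith
    qed
    also have "\<bar>blinfun_apply (zseq k) (dseq i)\<bar> \<le> (1/2)^k" using k by (intro zseq_small_on_dense) (auto simp: N_def)
    also have "(1/2::real)^k \<le> (1/2)^N0" using k by (intro power_decreasing) (auto simp: N_def)
    finally show ?thesis using N0 i by linarith
  qed
  thus ?thesis by blast
qed

lemma node_fun_uniform_close:
  assumes e: "e > 0"
  shows "\<exists>N. \<forall>s u. prefix s u \<longrightarrow> N \<le> code s \<longrightarrow>
           \<bar>blinfun_apply (node_fun u) y - blinfun_apply (node_fun s) y\<bar> < e"
proof -
  obtain i where i: "norm (y - dseq i) < e/8" using dense e by (meson zero_less_divide_iff zero_less_numeral)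
  obtain N0 where N0: "(1/2::real)^N0 < e/2" using real_arch_pow_inv[of "e/2" "1/2::real"] e by auto
  have "\<bar>blinfun_apply (node_fun u) y - blinfun_apply (node_fun s) y\<bar> < e"
    if su: "prefix s u" and N: "max N0 i \<le> code s" for s u
  proof -
    have "\<bar>blinfun_apply (node_fun u) (dseq i) - blinfun_apply (node_fun s) (dseq i)\<bar> \<le> (1/2)^(code s)"
      using N by (intro node_fun_close[OF su]) auto
    also have "(1/2::real)^(code s) \<le> (1/2)^N0" using N by (intro power_decreasing) auto
    finally have a: "\<bar>blinfun_apply (node_fun u) (dseq i) - blinfun_apply (node_fun s) (dseq i)\<bar> < e/2"
      using N0 by linarith
    have "2 * (1 + \<rho>) * norm (y - dseq i) \<le> 4 * norm (y - dseq i)"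
      using rho by (intro mult_right_mono) auto
    moreover have "\<bar>blinfun_apply (node_fun u) y - blinfun_apply (node_fun s) y\<bar>
        \<le> \<bar>blinfun_apply (node_fun u) (dseq i) - blinfun_apply (node_fun s) (dseq i)\<bar>
           + 2 * (1 + \<rho>) * norm (y - dseq i)"
      by (rule apply_diff_le_at_nearby[OF norm_node_fun_le norm_node_fun_le])
    ultimately show ?thesis using a i by linarith
  qed
  thus ?thesis by blast
qed

end

locale tree_construction = biorthogonal_construction S dseq \<rho>
  for S :: "('a::real_normed_vector \<Rightarrow>\<^sub>L real) set" and dseq \<rho> +
  fixes T :: "nat list set"
  assumes dc: "downwards_closed T"
begin

definition branch_fun :: "nat list set \<Rightarrow> ('a \<Rightarrow>\<^sub>L real)" where
  "branch_fun b = blinfun_lim (\<lambda>k. node_fun (branch_node b k))"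

lemma node_fun_branch_convergent:
  assumes b: "b \<in> branches T"
  shows "convergent (\<lambda>k. blinfun_apply (node_fun (branch_node b k)) y)"
proof -
  define X where "X = (\<lambda>k. blinfun_apply (node_fun (branch_node b k)) y)"
  have "Cauchy X"
    unfolding Cauchy_def
  proof (intro allI impI)
    fix e :: real assume "e > 0"
    then obtain M where M: "\<forall>s u. prefix s u \<longrightarrow> M \<le> code s \<longrightarrow>
        \<bar>blinfun_apply (node_fun u) y - blinfun_apply (node_fun s) y\<bar> < e/2"
      using node_fun_uniform_close[of "e/2" y] by auto
    have close: "\<bar>X m - X M\<bar> < e/2" if "m \<ge> M" for m
      using M prefix_branch_node_mono[OF dc b that] code_branch_node_ge[OF dc b, of M]
      unfolding X_def by blast
    have "dist (X m) (X n) < e" if "m \<ge> M" "n \<ge> M" for m n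
      using close[OF that(1)] close[OF that(2)] unfolding dist_real_def abs_less_iff by linarith
    thus "\<exists>M. \<forall>m\<ge>M. \<forall>n\<ge>M. dist (X m) (X n) < e" by blast
  qed
  thus ?thesis by (simp add: X_def Cauchy_convergent_iff)
qed

lemma
  assumes b: "b \<in> branches T"
  shows branch_fun_tendsto:
      "(\<lambda>k. blinfun_apply (node_fun (branch_node b k)) y) \<longlonglongrightarrow> blinfun_apply (branch_fun b) y"
    and norm_branch_fun_le: "norm (branch_fun b) \<le> 1 + \<rho>"
  unfolding branch_fun_def
  by (rule blinfun_lim_tendsto norm_blinfun_lim_le, rule norm_node_fun_le, rule node_fun_branch_convergent[OF b])+

lemma branch_fun_xseq:
  assumes b: "b \<in> branches T"
  shows "blinfun_apply (branch_fun b) (xseq (code s)) = (if s \<in> b then 1 else 0)"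
proof -
  have "\<forall>k\<ge>length s. blinfun_apply (node_fun (branch_node b k)) (xseq (code s)) = (if s \<in> b then 1 else 0)"
    using prefix_branch_node_iff[OF dc b] by (simp add: node_fun_xseq)
  hence "eventually (\<lambda>k. blinfun_apply (node_fun (branch_node b k)) (xseq (code s)) = (if s \<in> b then 1 else 0))
      sequentially" unfolding eventually_sequentially by blast
  hence "(\<lambda>k. blinfun_apply (node_fun (branch_node b k)) (xseq (code s))) \<longlonglongrightarrow> (if s \<in> b then 1 else 0)"
    by (rule tendsto_eventually)
  thus ?thesis using branch_fun_tendsto[OF b] LIMSEQ_unique by blast
qed

definition tree_fun :: "nat list + nat list set \<Rightarrow> ('a \<Rightarrow>\<^sub>L real)" where
  "tree_fun u = (case u of Inl t \<Rightarrow> node_fun t | Inr b \<Rightarrow> branch_fun b)"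

lemma norm_tree_fun_le: "u \<in> tree_closure T \<Longrightarrow> norm (tree_fun u) \<le> 1 + \<rho>"
  by (cases rule: tree_closure_cases) (auto simp: tree_fun_def norm_node_fun_le norm_branch_fun_le)

lemma tree_fun_xseq:
  "u \<in> tree_closure T \<Longrightarrow> blinfun_apply (tree_fun u) (xseq (code s)) = (if wedge_le (Inl s) u then 1 else 0)"
  by (cases rule: tree_closure_cases) (auto simp: tree_fun_def node_fun_xseq branch_fun_xseq)

lemma tree_fun_uniform_close:
  assumes e: "e > 0"
  shows "\<exists>N. \<forall>s u. u \<in> tree_closure T \<longrightarrow> wedge_le (Inl s) u \<longrightarrow> N \<le> code s \<longrightarrow>
           \<bar>blinfun_apply (tree_fun u) y - blinfun_apply (node_fun s) y\<bar> < e"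
proof -
  obtain N where N: "\<forall>s u. prefix s u \<longrightarrow> N \<le> code s \<longrightarrow>
      \<bar>blinfun_apply (node_fun u) y - blinfun_apply (node_fun s) y\<bar> < e/2"
    using node_fun_uniform_close[of "e/2" y] e by auto
  have "\<bar>blinfun_apply (tree_fun u) y - blinfun_apply (node_fun s) y\<bar> \<le> e/2"
    if u: "u \<in> tree_closure T" and su: "wedge_le (Inl s) u" and Ns: "N \<le> code s" for s u
    using u
  proof (cases rule: tree_closure_cases)
    case (1 t)
    hence "prefix s t" using su by simp
    thus ?thesis using N Ns 1 by (simp add: tree_fun_def less_imp_le)
  next
    case (2 b)
    have "s \<in> b" using su 2 by simp
    hence "prefix s (branch_node b k)" if "k \<ge> length s" for k
      using prefix_branch_node_iff[OF dc 2(2) that] by simp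
    hence "\<forall>k\<ge>length s. \<bar>blinfun_apply (node_fun (branch_node b k)) y - blinfun_apply (node_fun s) y\<bar> \<le> e/2"
      using N Ns by (simp add: less_imp_le)
    moreover have "(\<lambda>k. \<bar>blinfun_apply (node_fun (branch_node b k)) y - blinfun_apply (node_fun s) y\<bar>)
        \<longlonglongrightarrow> \<bar>blinfun_apply (tree_fun u) y - blinfun_apply (node_fun s) y\<bar>"
      unfolding 2 tree_fun_def using branch_fun_tendsto[OF 2(2)] by (intro tendsto_rabs tendsto_diff) simp_all
    ultimately show ?thesis using LIMSEQ_le_const2 by blast
  qed
  moreover have "e/2 < e" using e by simp
  ultimately show ?thesis by (meson order_le_less_trans)
qed

text \<open>The points of the cone below \<open>t\<close> that avoid the finitely many cones at \<open>t @ [m]\<close>, \<open>m < M\<close>,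
  either equal \<open>t\<close> or lie below some \<open>t @ [m]\<close> with a large code; there \<open>tree_fun\<close> is close to
  \<open>node_fun (t @ [m]) = node_fun t + zseq (code (t @ [m]))\<close>, and \<open>zseq\<close> is weak-star null.\<close>
lemma tree_fun_nbhd_node:
  assumes t: "t \<in> T" and e: "e > 0"
  shows "\<exists>N. openin (coarse_wedge_topology T) N \<and> Inl t \<in> N \<and>
           (\<forall>w\<in>N. \<bar>blinfun_apply (tree_fun w) x - blinfun_apply (node_fun t) x\<bar> < e)"
proof -
  obtain N1 where N1: "\<forall>s u. u \<in> tree_closure T \<longrightarrow> wedge_le (Inl s) u \<longrightarrow> N1 \<le> code s \<longrightarrow>
      \<bar>blinfun_apply (tree_fun u) x - blinfun_apply (node_fun s) x\<bar> < e/2"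
    using tree_fun_uniform_close[of "e/2" x] e by auto
  obtain N2 where N2: "\<forall>k\<ge>N2. \<bar>blinfun_apply (zseq k) x\<bar> < e/2"
    using zseq_weak_star_null[of "e/2" x] e by auto
  define M where "M = max N1 N2"
  define F where "F = insert (wedge_cone T t)
    ((\<lambda>m. tree_closure T - wedge_cone T (t @ [m])) ` {m. m < M \<and> t @ [m] \<in> T})"
  have "finite F" unfolding F_def by (auto intro: finite_subset[of _ "{..<M}"])
  moreover have "\<forall>K\<in>F. openin (coarse_wedge_topology T) K"
    unfolding F_def using t openin_wedge_cone openin_wedge_cone_compl by auto
  ultimately have opF: "openin (coarse_wedge_topology T) (\<Inter>F)" by (intro openin_Inter) (auto simp: F_def)
  have "Inl t \<in> wedge_cone T t" "Inl t \<notin> wedge_cone T (t @ [m])" for m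
    using t prefix_length_le[of "t @ [m]" t] by (auto simp: wedge_cone_def tree_closure_def)
  hence tF: "Inl t \<in> \<Inter>F" using t by (auto simp: F_def tree_closure_def)
  have "\<bar>blinfun_apply (tree_fun w) x - blinfun_apply (node_fun t) x\<bar> < e" if w: "w \<in> \<Inter>F" for w
  proof (cases "w = Inl t")
    case False
    have wc: "w \<in> tree_closure T" "wedge_le (Inl t) w" using w by (auto simp: F_def wedge_cone_def)
    obtain m where m: "wedge_le (Inl (t @ [m])) w" "t @ [m] \<in> T" using next_node_below[OF dc wc False] by blast
    have "M \<le> m"
    proof (rule ccontr)
      assume "\<not> M \<le> m"
      hence "tree_closure T - wedge_cone T (t @ [m]) \<in> F" using m(2) by (auto simp: F_def)
      hence "w \<notin> wedge_cone T (t @ [m])" using w by blast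
      thus False using m(1) wc(1) by (simp add: wedge_cone_def)
    qed
    hence cm: "M < code (t @ [m])" using less_code_snoc[of m t] by linarith
    have "\<bar>blinfun_apply (tree_fun w) x - blinfun_apply (node_fun (t @ [m])) x\<bar> < e/2"
      using N1 wc(1) m(1) cm by (auto simp: M_def)
    moreover have "\<bar>blinfun_apply (zseq (code (t @ [m]))) x\<bar> < e/2" using N2 cm by (auto simp: M_def)
    moreover have "blinfun_apply (node_fun (t @ [m])) x = blinfun_apply (node_fun t) x + blinfun_apply (zseq (code (t @ [m]))) x"
      by (simp add: node_fun_snoc blinfun.add_left)
    ultimately show ?thesis unfolding abs_less_iff by linarith
  qed (use e in \<open>simp add: tree_fun_def\<close>)
  thus ?thesis using opF tF by blast
qed

lemma tree_fun_nbhd_branch: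
  assumes b: "b \<in> branches T" and e: "e > 0"
  shows "\<exists>N. openin (coarse_wedge_topology T) N \<and> Inr b \<in> N \<and>
           (\<forall>w\<in>N. \<bar>blinfun_apply (tree_fun w) x - blinfun_apply (tree_fun (Inr b)) x\<bar> < e)"
proof -
  obtain N1 where N1: "\<forall>s u. u \<in> tree_closure T \<longrightarrow> wedge_le (Inl s) u \<longrightarrow> N1 \<le> code s \<longrightarrow>
      \<bar>blinfun_apply (tree_fun u) x - blinfun_apply (node_fun s) x\<bar> < e/2"
    using tree_fun_uniform_close[of "e/2" x] e by auto
  define s where "s = branch_node b N1"
  have s: "s \<in> b" "s \<in> T" "N1 \<le> code s"
    using branch_node_in[OF dc b] branchesD(1)[OF b] code_branch_node_ge[OF dc b] unfolding s_def by auto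
  have close: "\<bar>blinfun_apply (tree_fun v) x - blinfun_apply (node_fun s) x\<bar> < e/2" if "v \<in> wedge_cone T s" for v
    using N1 that s(3) by (simp add: wedge_cone_def)
  have bs: "Inr b \<in> wedge_cone T s" using b s(1) by (simp add: wedge_cone_def tree_closure_def)
  have "\<bar>blinfun_apply (tree_fun w) x - blinfun_apply (tree_fun (Inr b)) x\<bar> < e" if "w \<in> wedge_cone T s" for w
    using close[OF that] close[OF bs] unfolding abs_less_iff by linarith
  thus ?thesis using openin_wedge_cone[OF s(2)] bs by blast
qed

lemma tree_fun_nbhd:
  assumes "u \<in> tree_closure T" and "e > 0"
  shows "\<exists>N. openin (coarse_wedge_topology T) N \<and> u \<in> N \<and>
           (\<forall>w\<in>N. \<bar>blinfun_apply (tree_fun w) x - blinfun_apply (tree_fun u) x\<bar> < e)"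
  using assms(1)
proof (cases rule: tree_closure_cases)
  case (1 t) thus ?thesis using tree_fun_nbhd_node[OF _ assms(2)] by (simp add: tree_fun_def)
next
  case (2 b) thus ?thesis using tree_fun_nbhd_branch[OF _ assms(2)] by simp
qed

lemma continuous_tree_fun:
  "continuous_map (coarse_wedge_topology T) (subtopology weak_star_topology (cball 0 (1 + \<rho>))) tree_fun"
proof -
  have "continuous_map (coarse_wedge_topology T) weak_star_topology tree_fun"
    using tree_fun_nbhd topspace_coarse_wedge_topology
    by (intro continuous_map_weak_star continuous_map_real_by_nbhds) auto
  moreover have "tree_fun ` topspace (coarse_wedge_topology T) \<subseteq> cball 0 (1 + \<rho>)"
    using norm_tree_fun_le by (auto simp: topspace_coarse_wedge_topology)
  ultimately show ?thesis unfolding continuous_map_in_subtopology by (auto simp: Pi_def image_subset_iff)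
qed

lemma tree_biorthogonal_system:
  "\<exists>(x :: nat list \<Rightarrow> 'a) (xs :: nat list + nat list set \<Rightarrow> ('a \<Rightarrow>\<^sub>L real)).
     (\<forall>t\<in>T. norm (x t) \<le> 1 + \<rho>) \<and>
     (\<forall>t\<in>tree_closure T. norm (xs t) \<le> 1 + \<rho>) \<and>
     (\<forall>s\<in>T. \<forall>t\<in>tree_closure T. blinfun_apply (xs t) (x s) = (if wedge_le (Inl s) t then 1 else 0)) \<and>
     continuous_map (coarse_wedge_topology T) (subtopology weak_star_topology (cball 0 (1 + \<rho>))) xs"
proof (intro exI conjI)
  show "\<forall>t\<in>T. norm (xseq (code t)) \<le> 1 + \<rho>"
  proof
    fix t show "norm (xseq (code t)) \<le> 1 + \<rho>" using norm_xseq_le[of "code t"] rho by linarith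
  qed
qed (use norm_tree_fun_le tree_fun_xseq continuous_tree_fun in auto)

end

lemma separable_dense_sequence:
  assumes "separable_space (euclidean :: 'a topology)"
  obtains d :: "nat \<Rightarrow> 'a::real_normed_vector" where "\<forall>y e. e > 0 \<longrightarrow> (\<exists>i. norm (y - d i) < e)"
proof -
  obtain C :: "'a set" where C: "countable C" "closure C = UNIV"
    using assms unfolding separable_space_def by auto
  have "\<exists>i. norm (y - from_nat_into C i) < e" if e: "e > 0" for y e
  proof -
    have "y \<in> closure C" using C(2) by simp
    then obtain c where c: "c \<in> C" "dist c y < e" using e unfolding closure_approachable by blast
    obtain i where "from_nat_into C i = c" using from_nat_into_surj[OF C(1) c(1)] by blast
    thus ?thesis using c(2) by (auto simp: dist_norm norm_minus_commute)
  qed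
  thus thesis by (intro that[of "from_nat_into C"]) blast
qed

theorem lemma6p2:
  fixes T :: "nat list set" and \<rho> :: real
  assumes "separable_space (euclidean :: ('a::banach) topology)"
    and "\<not> separable_space (euclidean :: ('a \<Rightarrow>\<^sub>L real) topology)"
    and "downwards_closed T"
    and "0 < \<rho>" and "\<rho> < 1"
  shows "\<exists>(x :: nat list \<Rightarrow> 'a) (xs :: nat list + nat list set \<Rightarrow> ('a \<Rightarrow>\<^sub>L real)).
           (\<forall>t\<in>T. norm (x t) \<le> 1 + \<rho>) \<and>
           (\<forall>t\<in>tree_closure T. norm (xs t) \<le> 1 + \<rho>) \<and>
           (\<forall>s\<in>T. \<forall>t\<in>tree_closure T.
              blinfun_apply (xs t) (x s) = (if wedge_le (Inl s) t then 1 else 0)) \<and>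
           continuous_map (coarse_wedge_topology T)
             (subtopology weak_star_topology (cball 0 (1 + \<rho>))) xs"
proof -
  obtain d :: "nat \<Rightarrow> 'a" where d: "\<forall>y e. e > 0 \<longrightarrow> (\<exists>i. norm (y - d i) < e)"
    using separable_dense_sequence[OF assms(1)] by blast
  have \<delta>: "0 < \<rho>/8" "\<rho>/8 < 1" using assms(4,5) by auto
  obtain S :: "('a \<Rightarrow>\<^sub>L real) set" where S: "S \<noteq> {}" "\<forall>f\<in>S. norm f = 1"
    "\<forall>f\<in>S. \<forall>Z \<tau> U. finite Z \<longrightarrow> \<tau> > 0 \<longrightarrow> finite U \<longrightarrow>
       (\<exists>g\<in>S. (\<forall>y\<in>Z. \<bar>blinfun_apply g y - blinfun_apply f y\<bar> < \<tau>) \<and>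
               (\<forall>w\<in>span U. 1 - \<rho>/8 \<le> norm (g - w)))"
    using far_approximating_set_exists[OF assms(2) \<delta> d] by (elim exE conjE)
  interpret tree_construction S d \<rho> T
    by unfold_locales (use assms(3-5) d S in auto)
  show ?thesis by (rule tree_biorthogonal_system)
qed

end
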